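(* Let $(C_\bullet,\partial^C_\bullet)$ be a chain complex in which each $C_n$ is the free abelian group on a finite set $K_n$ (nonempty for only finitely many $n$), and $(G_\bullet,\partial^G_\bullet)$ a chain complex of finite abelian groups, with $\mathrm{hom}^p$, $\mathrm{hom}_p$, $d^p$, $d_p$, $\chi$, $\mathcal H$, $P^\alpha$, $Q_{\hat\beta}$ as in the context. Let $$A_{\hat 0}=\frac{1}{|\mathrm{hom}^{-1}|}\sum_{\alpha\in\mathrm{hom}^{-1}}P^{d^{-1}\alpha},\qquad B^{0}=\frac{1}{|\mathrm{hom}_{1}|}\sum_{\hat\beta\in\mathrm{hom}_{1}}Q_{d_1\hat\beta},$$ and let the ground state subspace $\mathcal H_0$ be the range of the projector $\Pi^0_{\hat 0}=A_{\hat 0}B^0$. Then $\dim\mathcal H_0=|H_0(C,G)|$, where $H_0(C,G)=\ker(d_0)/\mathrm{im}(d_1)$.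
   Context: $\mathrm{hom}^p=\bigoplus_n\mathrm{Hom}(C_n,G_{n-p})$, $\mathrm{hom}_p=\bigoplus_n\mathrm{Hom}(C_n,\hat G_{n-p})$ with $\hat G_m=\mathrm{Hom}(G_m,U(1))$, abelian groups under pointwise addition. The nondegenerate pairing is $\chi_{\hat\rho}(\omega)=\prod_n\prod_{x\in K_n}\hat\rho_n(x)(\omega_n(x))$ for $\hat\rho\in\mathrm{hom}_p,\ \omega\in\mathrm{hom}^p$. $d^p:\mathrm{hom}^p\to\mathrm{hom}^{p+1}$ is $(d^p\omega)_n=\omega_{n-1}\circ\partial^C_n-(-1)^p\,\partial^G_{n-p}\circ\omega_n$, and $d_{p+1}:\mathrm{hom}_{p+1}\to\mathrm{hom}_p$ is the unique homomorphism with $\chi_{d_{p+1}\hat\nu}(\omega)=\chi_{\hat\nu}(d^p\omega)$ for all $\omega\in\mathrm{hom}^p$, $\hat\nu\in\mathrm{hom}_{p+1}$. $\mathcal H$ is the Hilbert space with orthonormal basis $\{|\omega\rangle:\omega\in\mathrm{hom}^0\}$; $P^\alpha|\omega\rangle=|\omega+\alpha\rangle$ ($\alpha\in\mathrm{hom}^0$), $Q_{\hat\beta}|\omega\rangle=\chi_{\hat\beta}(\omega)|\omega\rangle$ ($\hat\beta\in\mathrm{hom}_0$). *)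

theory Defs
  imports "HOL-Library.Function_Algebras" Complex_Main
begin

definition zsmult :: "int \<Rightarrow> 'g::ab_group_add \<Rightarrow> 'g" where
  "zsmult k a = (if 0 \<le> k then ((+) a ^^ nat k) 0 else - (((+) a ^^ nat (- k)) 0))"

definition is_char :: "'g::ab_group_add set \<Rightarrow> ('g \<Rightarrow> complex) \<Rightarrow> bool" where
  "is_char S chi \<longleftrightarrow> (\<forall>a\<in>S. \<forall>b\<in>S. chi (a + b) = chi a * chi b)
     \<and> (\<forall>a\<in>S. cmod (chi a) = 1) \<and> (\<forall>a. a \<notin> S \<longrightarrow> chi a = 1)"

text \<open>hom^p = \<Oplus>_n Hom(C_n, G_{n-p}); a homomorphism on the free group C_n
  is given by its values on the basis K n (extended by 0 off K n).\<close>
definition homU :: "(int \<Rightarrow> 'k set) \<Rightarrow> (int \<Rightarrow> 'g::ab_group_add set) \<Rightarrow> int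
     \<Rightarrow> (int \<Rightarrow> 'k \<Rightarrow> 'g) set" where
  "homU K G p = {\<omega>. \<forall>n x. (x \<in> K n \<longrightarrow> \<omega> n x \<in> G (n - p)) \<and> (x \<notin> K n \<longrightarrow> \<omega> n x = 0)}"

text \<open>hom_p = \<Oplus>_n Hom(C_n, \<hat>G_{n-p}); group operation is pointwise multiplication.\<close>
definition homL :: "(int \<Rightarrow> 'k set) \<Rightarrow> (int \<Rightarrow> 'g::ab_group_add set) \<Rightarrow> int
     \<Rightarrow> (int \<Rightarrow> 'k \<Rightarrow> 'g \<Rightarrow> complex) set" where
  "homL K G p = {\<rho>. \<forall>n x. (x \<in> K n \<longrightarrow> is_char (G (n - p)) (\<rho> n x))
                         \<and> (x \<notin> K n \<longrightarrow> \<rho> n x = (\<lambda>_. 1))}"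

definition mulL :: "(int \<Rightarrow> 'k \<Rightarrow> 'g \<Rightarrow> complex) \<Rightarrow> (int \<Rightarrow> 'k \<Rightarrow> 'g \<Rightarrow> complex)
     \<Rightarrow> (int \<Rightarrow> 'k \<Rightarrow> 'g \<Rightarrow> complex)" where
  "mulL \<rho> \<mu> = (\<lambda>n x a. \<rho> n x a * \<mu> n x a)"

definition oneL :: "int \<Rightarrow> 'k \<Rightarrow> 'g \<Rightarrow> complex" where
  "oneL = (\<lambda>n x a. 1)"

definition pairing :: "(int \<Rightarrow> 'k set) \<Rightarrow> (int \<Rightarrow> 'k \<Rightarrow> 'g \<Rightarrow> complex)
     \<Rightarrow> (int \<Rightarrow> 'k \<Rightarrow> 'g) \<Rightarrow> complex" where
  "pairing K \<rho> \<omega> = (\<Prod>n\<in>{n. K n \<noteq> {}}. \<Prod>x\<in>K n. \<rho> n x (\<omega> n x))"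

text \<open>d^p: (d^p \<omega>)_n = \<omega>_{n-1} \<circ> \<partial>^C_n - (-1)^p \<partial>^G_{n-p} \<circ> \<omega>_n, where
  \<partial>^C_n x = \<Sum>_{y \<in> K(n-1)} c n x y \<cdot> y.\<close>
definition dU :: "(int \<Rightarrow> 'k set) \<Rightarrow> (int \<Rightarrow> 'k \<Rightarrow> 'k \<Rightarrow> int) \<Rightarrow> (int \<Rightarrow> 'g \<Rightarrow> 'g)
     \<Rightarrow> int \<Rightarrow> (int \<Rightarrow> 'k \<Rightarrow> 'g::ab_group_add) \<Rightarrow> (int \<Rightarrow> 'k \<Rightarrow> 'g)" where
  "dU K c dG p \<omega> = (\<lambda>n x. if x \<in> K n then
        (\<Sum>y\<in>K (n - 1). zsmult (c n x y) (\<omega> (n - 1) y))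
          - (if even p then dG (n - p) (\<omega> n x) else - dG (n - p) (\<omega> n x))
      else 0)"

text \<open>d_q: hom_q \<rightarrow> hom_{q-1}, the unique map adjoint to d^{q-1} under the pairing.\<close>
definition dL :: "(int \<Rightarrow> 'k set) \<Rightarrow> (int \<Rightarrow> 'g::ab_group_add set) \<Rightarrow> (int \<Rightarrow> 'k \<Rightarrow> 'k \<Rightarrow> int)
     \<Rightarrow> (int \<Rightarrow> 'g \<Rightarrow> 'g) \<Rightarrow> int \<Rightarrow> (int \<Rightarrow> 'k \<Rightarrow> 'g \<Rightarrow> complex) \<Rightarrow> (int \<Rightarrow> 'k \<Rightarrow> 'g \<Rightarrow> complex)" where
  "dL K G c dG q \<nu> = (THE \<mu>. \<mu> \<in> homL K G (q - 1) \<and>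
      (\<forall>\<omega>\<in>homU K G (q - 1). pairing K \<mu> \<omega> = pairing K \<nu> (dU K c dG (q - 1) \<omega>)))"

text \<open>Hilbert space: complex functions on the basis hom^0 (coefficient vectors).\<close>
definition Hspace :: "(int \<Rightarrow> 'k set) \<Rightarrow> (int \<Rightarrow> 'g::ab_group_add set)
     \<Rightarrow> ((int \<Rightarrow> 'k \<Rightarrow> 'g) \<Rightarrow> complex) set" where
  "Hspace K G = {\<psi>. \<forall>\<omega>. \<omega> \<notin> homU K G 0 \<longrightarrow> \<psi> \<omega> = 0}"

text \<open>P^\<alpha> |\<omega>> = |\<omega>+\<alpha>>, i.e. on coefficients (P^\<alpha> \<psi>)(\<omega>) = \<psi>(\<omega>-\<alpha>).\<close>
definition Pop :: "(int \<Rightarrow> 'k set) \<Rightarrow> (int \<Rightarrow> 'g::ab_group_add set) \<Rightarrow> (int \<Rightarrow> 'k \<Rightarrow> 'g)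
     \<Rightarrow> ((int \<Rightarrow> 'k \<Rightarrow> 'g) \<Rightarrow> complex) \<Rightarrow> ((int \<Rightarrow> 'k \<Rightarrow> 'g) \<Rightarrow> complex)" where
  "Pop K G \<alpha> \<psi> = (\<lambda>\<omega>. if \<omega> \<in> homU K G 0 then \<psi> (\<lambda>n x. \<omega> n x - \<alpha> n x) else 0)"

definition Qop :: "(int \<Rightarrow> 'k set) \<Rightarrow> (int \<Rightarrow> 'k \<Rightarrow> 'g \<Rightarrow> complex)
     \<Rightarrow> ((int \<Rightarrow> 'k \<Rightarrow> 'g) \<Rightarrow> complex) \<Rightarrow> ((int \<Rightarrow> 'k \<Rightarrow> 'g) \<Rightarrow> complex)" where
  "Qop K \<beta> \<psi> = (\<lambda>\<omega>. pairing K \<beta> \<omega> * \<psi> \<omega>)"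

definition Aop :: "(int \<Rightarrow> 'k set) \<Rightarrow> (int \<Rightarrow> 'g::ab_group_add set) \<Rightarrow> (int \<Rightarrow> 'k \<Rightarrow> 'k \<Rightarrow> int)
     \<Rightarrow> (int \<Rightarrow> 'g \<Rightarrow> 'g) \<Rightarrow> ((int \<Rightarrow> 'k \<Rightarrow> 'g) \<Rightarrow> complex) \<Rightarrow> ((int \<Rightarrow> 'k \<Rightarrow> 'g) \<Rightarrow> complex)" where
  "Aop K G c dG \<psi> = (\<lambda>\<omega>. (\<Sum>\<alpha>\<in>homU K G (-1). Pop K G (dU K c dG (-1) \<alpha>) \<psi> \<omega>)
                           / of_nat (card (homU K G (-1))))"

definition Bop :: "(int \<Rightarrow> 'k set) \<Rightarrow> (int \<Rightarrow> 'g::ab_group_add set) \<Rightarrow> (int \<Rightarrow> 'k \<Rightarrow> 'k \<Rightarrow> int)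
     \<Rightarrow> (int \<Rightarrow> 'g \<Rightarrow> 'g) \<Rightarrow> ((int \<Rightarrow> 'k \<Rightarrow> 'g) \<Rightarrow> complex) \<Rightarrow> ((int \<Rightarrow> 'k \<Rightarrow> 'g) \<Rightarrow> complex)" where
  "Bop K G c dG \<psi> = (\<lambda>\<omega>. (\<Sum>\<beta>\<in>homL K G 1. Qop K (dL K G c dG 1 \<beta>) \<psi> \<omega>)
                           / of_nat (card (homL K G 1)))"

definition ground_space :: "(int \<Rightarrow> 'k set) \<Rightarrow> (int \<Rightarrow> 'g::ab_group_add set) \<Rightarrow> (int \<Rightarrow> 'k \<Rightarrow> 'k \<Rightarrow> int)
     \<Rightarrow> (int \<Rightarrow> 'g \<Rightarrow> 'g) \<Rightarrow> ((int \<Rightarrow> 'k \<Rightarrow> 'g) \<Rightarrow> complex) set" where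
  "ground_space K G c dG = (\<lambda>\<psi>. Aop K G c dG (Bop K G c dG \<psi>)) ` Hspace K G"

definition cdim :: "('a \<Rightarrow> complex) set \<Rightarrow> nat" where
  "cdim S = vector_space.dim (\<lambda>(a::complex) f x. a * f x) S"

definition H0 :: "(int \<Rightarrow> 'k set) \<Rightarrow> (int \<Rightarrow> 'g::ab_group_add set) \<Rightarrow> (int \<Rightarrow> 'k \<Rightarrow> 'k \<Rightarrow> int)
     \<Rightarrow> (int \<Rightarrow> 'g \<Rightarrow> 'g) \<Rightarrow> (int \<Rightarrow> 'k \<Rightarrow> 'g \<Rightarrow> complex) set set" where
  "H0 K G c dG = (\<lambda>\<rho>. mulL \<rho> ` (dL K G c dG 1 ` homL K G 1))
       ` {\<rho> \<in> homL K G 0. dL K G c dG 0 \<rho> = oneL}"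

end

theory Submission
  imports Defs "HOL-Algebra.Coset" "HOL-Algebra.Left_Coset" "HOL-Library.Indicator_Function"
begin

text \<open>
  Write \<open>Z = ker d\<^sup>0\<close> and \<open>B = im d\<^sup>-\<^sup>1 \<subseteq> Z\<close> inside the finite group \<open>hom\<^sup>0\<close>.
  By orthogonality of characters, the average of the \<open>Q\<^bsub>d\<^sub>1\<beta>\<^esub>\<close> is the projection onto
  vectors supported on \<open>Z\<close>, and the average of the translations \<open>P\<^bsup>d\<alpha>\<^esup>\<close> symmetrises
  over \<open>B\<close>. So the ground space consists of the functions supported on \<open>Z\<close> that are
  constant on the cosets of \<open>B\<close>, and its dimension is \<open>|Z/B|\<close>.

  Dually, \<open>hom\<^sub>p\<close> is the character group of \<open>hom\<^sup>p\<close>; \<open>ker d\<^sub>0\<close> and \<open>im d\<^sub>1\<close> are the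
  annihilators of \<open>B\<close> and \<open>Z\<close>, so \<open>|H\<^sub>0| = |Ann B| / |Ann Z| = |Z| / |B|\<close>. Both counts
  rest on the fact that a finite abelian group \<open>S\<close> has exactly \<open>|S| / |T|\<close> characters
  trivial on a subgroup \<open>T\<close>, proved by extending characters one generator at a time.
\<close>

section \<open>Integer multiples and additive subgroups\<close>

lemma zsmult_zero_left [simp]: "zsmult 0 a = 0"
  by (simp add: zsmult_def)

lemma zsmult_plus_one: "zsmult (k + 1) a = zsmult k a + a"
proof (cases "0 \<le> k")
  case True
  then have "nat (k + 1) = Suc (nat k)" by simp
  with True show ?thesis by (simp add: zsmult_def add.commute)
next
  case False
  then show ?thesis
  proof (cases "k = -1")
    case False
    with \<open>\<not> 0 \<le> k\<close> have "nat (- k) = Suc (nat (- (k + 1)))" "\<not> 0 \<le> k + 1" by auto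
    with \<open>\<not> 0 \<le> k\<close> show ?thesis by (simp add: zsmult_def algebra_simps)
  qed (simp add: zsmult_def)
qed

lemma zsmult_minus_one: "zsmult (k - 1) a = zsmult k a - a"
  using zsmult_plus_one[of "k - 1" a] by (simp add: algebra_simps)

lemma zsmult_one [simp]: "zsmult 1 a = a"
  using zsmult_plus_one[of 0 a] by simp

lemma zsmult_add_left: "zsmult (k + l) a = zsmult k a + zsmult l a"
proof (induction l rule: int_induct[where k = 0])
  case (step1 l)
  then show ?case using zsmult_plus_one[of "k + l" a] by (simp add: zsmult_plus_one add.assoc)
next
  case (step2 l)
  then show ?case using zsmult_minus_one[of "k + l" a] by (simp add: zsmult_minus_one algebra_simps)
qed simp

lemma zsmult_add_right: "zsmult k (a + b) = zsmult k a + zsmult k b"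
  by (induction k rule: int_induct[where k = 0])
    (simp_all add: zsmult_plus_one zsmult_minus_one algebra_simps)

lemma zsmult_zero_right [simp]: "zsmult k 0 = 0"
  using zsmult_add_right[of k 0 0] by simp

lemma zsmult_uminus_right: "zsmult k (- a) = - zsmult k a"
  using zsmult_add_right[of k a "- a"] by (simp add: eq_neg_iff_add_eq_0 add.commute)

lemma zsmult_diff_right: "zsmult k (a - b) = zsmult k a - zsmult k b"
  using zsmult_add_right[of k a "- b"] by (simp add: zsmult_uminus_right)

lemma zsmult_uminus_left: "zsmult (- k) a = - zsmult k a"
  using zsmult_add_left[of k "- k" a] by (simp add: eq_neg_iff_add_eq_0 add.commute)

lemma zsmult_diff_left: "zsmult (k - l) a = zsmult k a - zsmult l a"
  using zsmult_add_left[of k "- l" a] by (simp add: zsmult_uminus_left)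

lemma zsmult_zsmult: "zsmult k (zsmult l a) = zsmult (k * l) a"
  by (induction k rule: int_induct[where k = 0])
    (simp_all add: zsmult_plus_one zsmult_minus_one zsmult_add_left zsmult_diff_left
      distrib_right left_diff_distrib)

lemma zsmult_sum_left: "zsmult (\<Sum>i\<in>I. f i) a = (\<Sum>i\<in>I. zsmult (f i) a)"
  by (induction I rule: infinite_finite_induct) (auto simp: zsmult_add_left)

lemma zsmult_sum_right: "zsmult k (\<Sum>i\<in>I. f i) = (\<Sum>i\<in>I. zsmult k (f i))"
  by (induction I rule: infinite_finite_induct) (auto simp: zsmult_add_right)

lemma zsmult_of_nat_Suc: "zsmult (int (Suc k)) a = zsmult (int k) a + a"
  using zsmult_plus_one[of "int k" a] by (simp add: add.commute)

lemma sum_fun_apply: "(\<Sum>i\<in>I. f i) x = (\<Sum>i\<in>I. f i x)"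
  by (induction I rule: infinite_finite_induct) auto

definition add_subgroup :: "'a::ab_group_add set \<Rightarrow> bool" where
  "add_subgroup S \<longleftrightarrow> 0 \<in> S \<and> (\<forall>a\<in>S. \<forall>b\<in>S. a + b \<in> S) \<and> (\<forall>a\<in>S. - a \<in> S)"

definition additive_on :: "'a::ab_group_add set \<Rightarrow> ('a \<Rightarrow> 'b::ab_group_add) \<Rightarrow> bool" where
  "additive_on S f \<longleftrightarrow> (\<forall>a\<in>S. \<forall>b\<in>S. f (a + b) = f a + f b)"

context
  fixes S :: "'a::ab_group_add set"
  assumes S: "add_subgroup S"
begin

lemma add_subgroup_zero: "0 \<in> S"
  and add_subgroup_add: "a \<in> S \<Longrightarrow> b \<in> S \<Longrightarrow> a + b \<in> S"
  and add_subgroup_uminus: "a \<in> S \<Longrightarrow> - a \<in> S"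
  using S unfolding add_subgroup_def by blast+

lemma add_subgroup_diff: "a \<in> S \<Longrightarrow> b \<in> S \<Longrightarrow> a - b \<in> S"
  using add_subgroup_add add_subgroup_uminus by (simp only: diff_conv_add_uminus)

lemma add_subgroup_sum: "(\<And>i. i \<in> I \<Longrightarrow> f i \<in> S) \<Longrightarrow> (\<Sum>i\<in>I. f i) \<in> S"
  by (induction I rule: infinite_finite_induct) (auto intro: add_subgroup_zero add_subgroup_add)

lemma add_subgroup_zsmult: "a \<in> S \<Longrightarrow> zsmult k a \<in> S"
  by (induction k rule: int_induct[where k = 0])
    (simp_all add: add_subgroup_zero add_subgroup_add add_subgroup_diff zsmult_plus_one zsmult_minus_one)

lemma add_subgroup_translate: "a \<in> S \<Longrightarrow> bij_betw (\<lambda>x. x - a) S S"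
  by (rule bij_betwI[where g = "\<lambda>x. x + a"]) (auto intro: add_subgroup_add add_subgroup_diff)

context
  fixes f :: "'a \<Rightarrow> 'b::ab_group_add"
  assumes f: "additive_on S f"
begin

lemma additive_onD: "a \<in> S \<Longrightarrow> b \<in> S \<Longrightarrow> f (a + b) = f a + f b"
  using f unfolding additive_on_def by blast

lemma additive_on_zero: "f 0 = 0"
  using additive_onD[OF add_subgroup_zero add_subgroup_zero] by simp

lemma additive_on_uminus: "a \<in> S \<Longrightarrow> f (- a) = - f a"
  using additive_onD[OF add_subgroup_uminus, of a a] additive_on_zero
  by (simp add: eq_neg_iff_add_eq_0)

lemma additive_on_diff: "a \<in> S \<Longrightarrow> b \<in> S \<Longrightarrow> f (a - b) = f a - f b"
  using additive_onD[OF _ add_subgroup_uminus, of a b] additive_on_uminus[of b]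
  by (simp add: diff_conv_add_uminus del: add_uminus_conv_diff)

lemma additive_on_sum:
  assumes "\<And>i. i \<in> I \<Longrightarrow> g i \<in> S"
  shows "f (\<Sum>i\<in>I. g i) = (\<Sum>i\<in>I. f (g i))"
  using assms
proof (induction I rule: infinite_finite_induct)
  case (insert i I)
  then show ?case by (simp add: additive_onD add_subgroup_sum)
qed (simp_all add: additive_on_zero)

lemma additive_on_zsmult: "a \<in> S \<Longrightarrow> f (zsmult k a) = zsmult k (f a)"
  by (induction k rule: int_induct[where k = 0])
    (simp_all add: additive_on_zero additive_onD additive_on_diff add_subgroup_zsmult
      zsmult_plus_one zsmult_minus_one)

lemma add_subgroup_image: "add_subgroup (f ` S)"
  unfolding add_subgroup_def
proof (intro conjI ballI)
  show "0 \<in> f ` S"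
    using add_subgroup_zero additive_on_zero by (blast intro: sym)
next
  fix x y assume "x \<in> f ` S" "y \<in> f ` S"
  then obtain a b where "a \<in> S" "b \<in> S" "x = f a" "y = f b" by blast
  then show "x + y \<in> f ` S"
    using additive_onD add_subgroup_add by (blast intro: sym)
next
  fix x assume "x \<in> f ` S"
  then obtain a where "a \<in> S" "x = f a" by blast
  then show "- x \<in> f ` S"
    using additive_on_uminus add_subgroup_uminus by (blast intro: sym)
qed

lemma add_subgroup_kernel: "add_subgroup {a \<in> S. f a = 0}"
  unfolding add_subgroup_def
  by (simp add: additive_onD additive_on_uminus add_subgroup_zero add_subgroup_add
      add_subgroup_uminus additive_on_zero)

end

end

section \<open>Characters of finite abelian groups\<close>

context
  fixes S :: "'a::ab_group_add set" and \<chi> :: "'a \<Rightarrow> complex"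
  assumes S: "add_subgroup S" and \<chi>: "is_char S \<chi>"
begin

lemma is_char_add: "a \<in> S \<Longrightarrow> b \<in> S \<Longrightarrow> \<chi> (a + b) = \<chi> a * \<chi> b"
  and is_char_norm: "a \<in> S \<Longrightarrow> cmod (\<chi> a) = 1"
  and is_char_outside: "a \<notin> S \<Longrightarrow> \<chi> a = 1"
  using \<chi> unfolding is_char_def by blast+

lemma is_char_nonzero: "\<chi> a \<noteq> 0"
  by (cases "a \<in> S") (auto dest: is_char_norm simp: is_char_outside)

lemma is_char_zero: "\<chi> 0 = 1"
  using is_char_add[OF add_subgroup_zero[OF S] add_subgroup_zero[OF S]] is_char_nonzero[of 0]
  by simp

lemma is_char_mult_cnj: "\<chi> a * cnj (\<chi> a) = 1"
  by (cases "a \<in> S") (simp_all add: is_char_outside complex_norm_square[symmetric] is_char_norm)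

lemma is_char_power: "a \<in> S \<Longrightarrow> \<chi> (zsmult (int k) a) = \<chi> a ^ k"
proof (induction k)
  case (Suc k)
  then show ?case
    using is_char_add[of "zsmult (int k) a" a] add_subgroup_zsmult[OF S Suc.prems]
    by (simp only: zsmult_of_nat_Suc power_Suc mult.commute)
qed (simp add: is_char_zero)

lemma is_char_sum: "(\<And>i. i \<in> I \<Longrightarrow> f i \<in> S) \<Longrightarrow> \<chi> (\<Sum>i\<in>I. f i) = (\<Prod>i\<in>I. \<chi> (f i))"
proof (induction I rule: infinite_finite_induct)
  case (insert i I)
  then show ?case by (simp add: is_char_add add_subgroup_sum[OF S])
qed (simp_all add: is_char_zero)

end

lemma is_char_mult: "is_char S \<chi> \<Longrightarrow> is_char S \<psi> \<Longrightarrow> is_char S (\<lambda>x. \<chi> x * \<psi> x)"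
  unfolding is_char_def by (simp add: norm_mult)

lemma is_char_cnj: "is_char S \<chi> \<Longrightarrow> is_char S (\<lambda>x. cnj (\<chi> x))"
  unfolding is_char_def by simp

definition chars_trivial_on :: "'a::ab_group_add set \<Rightarrow> 'a set \<Rightarrow> ('a \<Rightarrow> complex) set" where
  "chars_trivial_on S T = {\<chi>. is_char S \<chi> \<and> (\<forall>t\<in>T. \<chi> t = 1)}"

definition order_modulo :: "'a::ab_group_add set \<Rightarrow> 'a \<Rightarrow> nat" where
  "order_modulo U b = (LEAST k. 0 < k \<and> zsmult (int k) b \<in> U)"

definition adjoin :: "'a::ab_group_add set \<Rightarrow> 'a \<Rightarrow> 'a set" where
  "adjoin U b = {u + zsmult (int k) b | u k. u \<in> U}"

context
  fixes S U :: "'a::ab_group_add set" and b :: 'a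
  assumes fin: "finite S" and S: "add_subgroup S" and U: "add_subgroup U" and US: "U \<subseteq> S"
    and b: "b \<in> S"
begin

lemma order_modulo_exists: "\<exists>k>0. zsmult (int k) b \<in> U"
proof -
  have "range (\<lambda>k::nat. zsmult (int k) b) \<subseteq> S"
    using add_subgroup_zsmult[OF S b] by blast
  then have "\<not> inj (\<lambda>k::nat. zsmult (int k) b)"
    using fin finite_subset finite_imageD infinite_UNIV_nat by blast
  then obtain i j where "i < j" "zsmult (int i) b = zsmult (int j) b"
    unfolding inj_def by (metis linorder_neqE_nat)
  then have "zsmult (int (j - i)) b = 0"
    by (simp add: of_nat_diff zsmult_diff_left)
  with \<open>i < j\<close> show ?thesis
    using add_subgroup_zero[OF U] by (intro exI[of _ "j - i"]) simp
qed

lemma order_modulo_pos: "0 < order_modulo U b"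
  and zsmult_order_modulo_in: "zsmult (int (order_modulo U b)) b \<in> U"
  using LeastI_ex[OF order_modulo_exists] unfolding order_modulo_def by auto

lemma zsmult_notin_below_order_modulo: "0 < k \<Longrightarrow> k < order_modulo U b \<Longrightarrow> zsmult (int k) b \<notin> U"
  unfolding order_modulo_def using not_less_Least by blast

lemma zsmult_in_iff_order_modulo_dvd: "zsmult (int j) b \<in> U \<longleftrightarrow> order_modulo U b dvd j"
proof
  let ?m = "order_modulo U b"
  have multiple: "zsmult (int (q * ?m)) b \<in> U" for q
    using add_subgroup_zsmult[OF U zsmult_order_modulo_in] by (simp add: zsmult_zsmult)
  show "?m dvd j" if "zsmult (int j) b \<in> U"
  proof -
    have "zsmult (int (j div ?m * ?m)) b + zsmult (int (j mod ?m)) b = zsmult (int j) b"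
      by (simp only: zsmult_add_left[symmetric] of_nat_add[symmetric] div_mult_mod_eq)
    then have "zsmult (int (j mod ?m)) b = zsmult (int j) b - zsmult (int (j div ?m * ?m)) b"
      by (simp add: algebra_simps)
    then have "zsmult (int (j mod ?m)) b \<in> U"
      using add_subgroup_diff[OF U that multiple] by simp
    then have "j mod ?m = 0"
      using zsmult_notin_below_order_modulo[of "j mod ?m"] order_modulo_pos by auto
    then show ?thesis by auto
  qed
  show "zsmult (int j) b \<in> U" if "?m dvd j"
    using that multiple by (auto simp: mult.commute)
qed

lemma adjoin_normal_form:
  assumes "x \<in> adjoin U b"
  obtains u k where "u \<in> U" "k < order_modulo U b" "x = u + zsmult (int k) b"
proof -
  let ?m = "order_modulo U b"
  obtain u k where u: "u \<in> U" and x: "x = u + zsmult (int k) b"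
    using assms unfolding adjoin_def by blast
  have "zsmult (int (k div ?m * ?m)) b + zsmult (int (k mod ?m)) b = zsmult (int k) b"
    by (simp only: zsmult_add_left[symmetric] of_nat_add[symmetric] div_mult_mod_eq)
  then have "x = (u + zsmult (int (k div ?m * ?m)) b) + zsmult (int (k mod ?m)) b"
    using x by (simp add: add.assoc)
  moreover have "zsmult (int (k div ?m * ?m)) b \<in> U"
    by (subst zsmult_in_iff_order_modulo_dvd) simp
  then have "u + zsmult (int (k div ?m * ?m)) b \<in> U"
    by (rule add_subgroup_add[OF U u])
  moreover have "k mod ?m < ?m"
    using order_modulo_pos by simp
  ultimately show thesis
    using that by blast
qed

lemma adjoin_normal_form_unique:
  assumes "u \<in> U" "u' \<in> U" "k < order_modulo U b" "k' < order_modulo U b"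
    and "u + zsmult (int k) b = u' + zsmult (int k') b"
  shows "k = k'" "u = u'"
proof -
  have le: "k = k'" if "u \<in> U" "u' \<in> U" "k \<le> k'" "k' < order_modulo U b"
    and "u + zsmult (int k) b = u' + zsmult (int k') b" for u u' k k'
  proof -
    have "zsmult (int (k' - k)) b = u - u'"
      using that(3,5) by (simp add: of_nat_diff zsmult_diff_left algebra_simps)
    then have "zsmult (int (k' - k)) b \<in> U"
      using add_subgroup_diff[OF U that(1,2)] by simp
    then have dvd: "order_modulo U b dvd k' - k"
      by (rule zsmult_in_iff_order_modulo_dvd[THEN iffD1])
    have "k' - k = 0"
    proof (rule ccontr)
      assume "k' - k \<noteq> 0"
      then have "order_modulo U b \<le> k' - k"
        using dvd by (simp add: dvd_imp_le)
      with that(4) show False by linarith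
    qed
    with that(3) show "k = k'" by simp
  qed
  show "k = k'"
  proof (cases "k \<le> k'")
    case True
    with le assms show ?thesis by blast
  next
    case False
    with le[of u' u k' k] assms show ?thesis by simp
  qed
  with assms(5) show "u = u'"
    by simp
qed

lemma add_subgroup_adjoin: "add_subgroup (adjoin U b)"
  unfolding add_subgroup_def
proof (intro conjI ballI)
  have "0 = 0 + zsmult (int 0) b" by simp
  then show "0 \<in> adjoin U b"
    unfolding adjoin_def using add_subgroup_zero[OF U] by blast
next
  fix x y assume "x \<in> adjoin U b" "y \<in> adjoin U b"
  then obtain u k u' k' where "u \<in> U" "u' \<in> U" "x = u + zsmult (int k) b" "y = u' + zsmult (int k') b"
    unfolding adjoin_def by blast
  moreover have "zsmult (int (k + k')) b = zsmult (int k) b + zsmult (int k') b"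
    by (metis of_nat_add zsmult_add_left)
  ultimately have "x + y = (u + u') + zsmult (int (k + k')) b" "u + u' \<in> U"
    using add_subgroup_add[OF U] by (simp_all add: ac_simps)
  then show "x + y \<in> adjoin U b"
    unfolding adjoin_def by blast
next
  fix x assume "x \<in> adjoin U b"
  then obtain u k where u: "u \<in> U" and x: "x = u + zsmult (int k) b"
    unfolding adjoin_def by blast
  let ?m = "order_modulo U b"
  \<comment> \<open>only nonnegative multiples of \<open>b\<close> occur in \<open>adjoin U b\<close>, so write \<open>- k b = (m - 1) k b - k m b\<close>\<close>
  have "k * ?m = (?m - 1) * k + k"
    using order_modulo_pos by (cases ?m) auto
  then have "zsmult (int (k * ?m)) b = zsmult (int ((?m - 1) * k)) b + zsmult (int k) b"
    by (metis of_nat_add zsmult_add_left)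
  then have "- x = (- u - zsmult (int (k * ?m)) b) + zsmult (int ((?m - 1) * k)) b"
    using x by (simp add: algebra_simps)
  moreover have "zsmult (int (k * ?m)) b \<in> U"
    by (subst zsmult_in_iff_order_modulo_dvd) simp
  then have "- u - zsmult (int (k * ?m)) b \<in> U"
    using u add_subgroup_uminus[OF U] add_subgroup_diff[OF U] by blast
  ultimately show "- x \<in> adjoin U b"
    unfolding adjoin_def by blast
qed

lemma subset_adjoin: "U \<subseteq> adjoin U b"
proof
  fix u assume "u \<in> U"
  moreover have "u = u + zsmult (int 0) b" by simp
  ultimately show "u \<in> adjoin U b"
    unfolding adjoin_def by blast
qed

lemma mem_adjoin: "b \<in> adjoin U b"
proof -
  have "b = 0 + zsmult (int 1) b" by simp
  then show ?thesis
    unfolding adjoin_def using add_subgroup_zero[OF U] by blast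
qed

lemma adjoin_subset: "adjoin U b \<subseteq> S"
  unfolding adjoin_def using US add_subgroup_add[OF S] add_subgroup_zsmult[OF S b] by blast

lemma card_adjoin: "card (adjoin U b) = order_modulo U b * card U"
proof -
  let ?f = "\<lambda>(u, k). u + zsmult (int k) b"
  have "bij_betw ?f (U \<times> {..<order_modulo U b}) (adjoin U b)"
  proof (rule bij_betw_imageI)
    show "inj_on ?f (U \<times> {..<order_modulo U b})"
      using adjoin_normal_form_unique by (auto simp: inj_on_def)
    show "?f ` (U \<times> {..<order_modulo U b}) = adjoin U b"
    proof
      show "?f ` (U \<times> {..<order_modulo U b}) \<subseteq> adjoin U b"
        unfolding adjoin_def by auto
      show "adjoin U b \<subseteq> ?f ` (U \<times> {..<order_modulo U b})"
      proof
        fix x assume "x \<in> adjoin U b"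
        then obtain u k where "u \<in> U" "k < order_modulo U b" "x = u + zsmult (int k) b"
          by (rule adjoin_normal_form)
        then show "x \<in> ?f ` (U \<times> {..<order_modulo U b})"
          by (intro image_eqI[of _ _ "(u, k)"]) auto
      qed
    qed
  qed
  then show ?thesis
    using bij_betw_same_card card_cartesian_product by (metis card_lessThan mult.commute)
qed

end

definition char_restrict :: "'a set \<Rightarrow> ('a \<Rightarrow> complex) \<Rightarrow> 'a \<Rightarrow> complex" where
  "char_restrict U \<chi> = (\<lambda>x. if x \<in> U then \<chi> x else 1)"

definition char_extension :: "'a::ab_group_add set \<Rightarrow> 'a \<Rightarrow> ('a \<Rightarrow> complex) \<Rightarrow> complex \<Rightarrow> 'a \<Rightarrow> complex"
  where "char_extension U b \<psi> z x = (if x \<in> adjoin U b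
    then (SOME v. \<exists>u\<in>U. \<exists>k. x = u + zsmult (int k) b \<and> v = \<psi> u * z ^ k) else 1)"

context
  fixes S U T :: "'a::ab_group_add set" and b :: 'a
  assumes fin: "finite S" and S: "add_subgroup S" and U: "add_subgroup U" and US: "U \<subseteq> S"
    and b: "b \<in> S" and TU: "T \<subseteq> U"
begin

private lemmas adjoin_facts = add_subgroup_adjoin[OF fin S U US b] subset_adjoin[OF fin S U US b]
  mem_adjoin[OF fin S U US b] order_modulo_pos[OF fin S U US b] zsmult_order_modulo_in[OF fin S U US b]

lemma char_adjoin_eq:
  assumes "\<chi> \<in> chars_trivial_on (adjoin U b) T" "u \<in> U"
  shows "\<chi> (u + zsmult (int k) b) = \<chi> u * \<chi> b ^ k"
proof -
  have \<chi>: "is_char (adjoin U b) \<chi>"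
    using assms(1) unfolding chars_trivial_on_def by blast
  have "u \<in> adjoin U b"
    using assms(2) adjoin_facts by blast
  then show ?thesis
    using is_char_add[OF _ \<chi>] is_char_power[OF _ \<chi>] add_subgroup_zsmult adjoin_facts by metis
qed

lemma char_restrict_in:
  assumes "\<chi> \<in> chars_trivial_on (adjoin U b) T"
  shows "char_restrict U \<chi> \<in> chars_trivial_on U T"
proof -
  have \<chi>: "is_char (adjoin U b) \<chi>" and triv: "\<forall>t\<in>T. \<chi> t = 1"
    using assms unfolding chars_trivial_on_def by blast+
  have "is_char U (char_restrict U \<chi>)"
    unfolding is_char_def char_restrict_def
    using is_char_add[OF _ \<chi>] is_char_norm[OF _ \<chi>] add_subgroup_add[OF U] adjoin_facts
    by (auto simp: subset_iff)
  moreover have "\<forall>t\<in>T. char_restrict U \<chi> t = 1"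
    using triv TU unfolding char_restrict_def by auto
  ultimately show ?thesis
    unfolding chars_trivial_on_def by blast
qed

lemma char_power_order_modulo:
  assumes "\<chi> \<in> chars_trivial_on (adjoin U b) T"
  shows "\<chi> b ^ order_modulo U b = char_restrict U \<chi> (zsmult (int (order_modulo U b)) b)"
  using assms is_char_power[OF _ _ mem_adjoin[OF fin S U US b]] adjoin_facts
  unfolding chars_trivial_on_def char_restrict_def by simp

context
  fixes \<psi> :: "'a \<Rightarrow> complex" and z :: complex
  assumes \<psi>: "\<psi> \<in> chars_trivial_on U T"
    and z: "z ^ order_modulo U b = \<psi> (zsmult (int (order_modulo U b)) b)"
begin

lemma extension_well_defined:
  assumes "u \<in> U" "u' \<in> U" "u + zsmult (int k) b = u' + zsmult (int k') b"
  shows "\<psi> u * z ^ k = \<psi> u' * z ^ k'"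
proof -
  let ?m = "order_modulo U b"
  have \<psi>U: "is_char U \<psi>"
    using \<psi> unfolding chars_trivial_on_def by blast
  have le: "\<psi> u * z ^ k = \<psi> u' * z ^ k'"
    if "u \<in> U" "u' \<in> U" "k \<le> k'" "u + zsmult (int k) b = u' + zsmult (int k') b" for u u' k k'
  proof -
    have u: "u = u' + zsmult (int (k' - k)) b"
      using that(3,4) by (simp add: of_nat_diff zsmult_diff_left algebra_simps)
    then have "zsmult (int (k' - k)) b \<in> U"
      using add_subgroup_diff[OF U that(1,2)] by (simp add: algebra_simps)
    then obtain q where q: "k' - k = ?m * q"
      using zsmult_in_iff_order_modulo_dvd[OF fin S U US b] by blast
    have "\<psi> (zsmult (int (k' - k)) b) = \<psi> (zsmult (int q) (zsmult (int ?m) b))"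
      by (simp add: q zsmult_zsmult mult.commute)
    also have "\<dots> = z ^ (?m * q)"
      using is_char_power[OF U \<psi>U adjoin_facts(5)] z by (simp add: power_mult)
    finally have "\<psi> u = \<psi> u' * z ^ (?m * q)"
      using u is_char_add[OF U \<psi>U that(2)] \<open>zsmult (int (k' - k)) b \<in> U\<close> by simp
    then have "\<psi> u * z ^ k = \<psi> u' * z ^ (?m * q + k)"
      by (simp add: power_add)
    also have "?m * q + k = k'"
      using q that(3) by simp
    finally show ?thesis .
  qed
  show ?thesis
  proof (cases "k \<le> k'")
    case True
    with le assms show ?thesis by blast
  next
    case False
    with le[of u' u k' k] assms show ?thesis by simp
  qed
qed

lemma char_extension_eq:
  assumes u: "u \<in> U"
  shows "char_extension U b \<psi> z (u + zsmult (int k) b) = \<psi> u * z ^ k"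
proof -
  let ?P = "\<lambda>v. \<exists>u'\<in>U. \<exists>k'. u + zsmult (int k) b = u' + zsmult (int k') b \<and> v = \<psi> u' * z ^ k'"
  have "u + zsmult (int k) b \<in> adjoin U b"
    using u unfolding adjoin_def by blast
  then have "char_extension U b \<psi> z (u + zsmult (int k) b) = (SOME v. ?P v)"
    unfolding char_extension_def by simp
  moreover have "?P (SOME v. ?P v)"
    by (rule someI[of ?P "\<psi> u * z ^ k"]) (use u in blast)
  then obtain u' k' where u': "u' \<in> U" and eq: "u + zsmult (int k) b = u' + zsmult (int k') b"
    and "(SOME v. ?P v) = \<psi> u' * z ^ k'"
    by blast
  moreover have "\<psi> u * z ^ k = \<psi> u' * z ^ k'"
    by (rule extension_well_defined[OF u u' eq])
  ultimately show ?thesis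
    by simp
qed

lemma is_char_char_extension: "is_char (adjoin U b) (char_extension U b \<psi> z)"
  unfolding is_char_def
proof (intro conjI ballI allI impI)
  have \<psi>U: "is_char U \<psi>"
    using \<psi> unfolding chars_trivial_on_def by blast
  fix x y assume "x \<in> adjoin U b" "y \<in> adjoin U b"
  then obtain u k u' k' where uk: "u \<in> U" "u' \<in> U" "x = u + zsmult (int k) b" "y = u' + zsmult (int k') b"
    unfolding adjoin_def by blast
  have "zsmult (int (k + k')) b = zsmult (int k) b + zsmult (int k') b"
    by (metis of_nat_add zsmult_add_left)
  then have "x + y = (u + u') + zsmult (int (k + k')) b"
    using uk by (simp add: ac_simps)
  then have "char_extension U b \<psi> z (x + y) = \<psi> (u + u') * z ^ (k + k')"
    using char_extension_eq[OF add_subgroup_add[OF U uk(1,2)], of "k + k'"] by simp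
  also have "\<dots> = (\<psi> u * z ^ k) * (\<psi> u' * z ^ k')"
    by (simp add: is_char_add[OF U \<psi>U uk(1,2)] power_add mult_ac)
  also have "\<dots> = char_extension U b \<psi> z x * char_extension U b \<psi> z y"
    using char_extension_eq uk by simp
  finally show "char_extension U b \<psi> z (x + y) = char_extension U b \<psi> z x * char_extension U b \<psi> z y" .
next
  have \<psi>U: "is_char U \<psi>"
    using \<psi> unfolding chars_trivial_on_def by blast
  have "cmod z ^ order_modulo U b = 1"
    using z is_char_norm[OF U \<psi>U adjoin_facts(5)] by (metis norm_power)
  then have norm_z: "cmod z = 1"
    using power_eq_iff_eq_base[of "order_modulo U b" "cmod z" 1] adjoin_facts(4) by simp
  fix x assume "x \<in> adjoin U b"
  then obtain u k where "u \<in> U" "x = u + zsmult (int k) b"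
    unfolding adjoin_def by blast
  then show "cmod (char_extension U b \<psi> z x) = 1"
    using char_extension_eq is_char_norm[OF U \<psi>U] norm_z by (simp add: norm_mult norm_power)
qed (simp add: char_extension_def)

lemma char_extend: "\<exists>\<chi>\<in>chars_trivial_on (adjoin U b) T. char_restrict U \<chi> = \<psi> \<and> \<chi> b = z"
proof (intro bexI conjI)
  have \<psi>U: "is_char U \<psi>" and triv: "\<forall>t\<in>T. \<psi> t = 1"
    using \<psi> unfolding chars_trivial_on_def by blast+
  have restrict: "char_extension U b \<psi> z u = \<psi> u" if "u \<in> U" for u
    using char_extension_eq[OF that, of 0] by simp
  then show "char_restrict U (char_extension U b \<psi> z) = \<psi>"
    using is_char_outside[OF U \<psi>U] unfolding char_restrict_def by (auto simp: fun_eq_iff)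
  show "char_extension U b \<psi> z b = z"
    using char_extension_eq[OF add_subgroup_zero[OF U], of 1] is_char_zero[OF U \<psi>U] by simp
  show "char_extension U b \<psi> z \<in> chars_trivial_on (adjoin U b) T"
    using is_char_char_extension restrict triv TU unfolding chars_trivial_on_def by auto
qed

end

lemma chars_adjoin_eqI:
  assumes \<chi>: "\<chi>1 \<in> chars_trivial_on (adjoin U b) T" "\<chi>2 \<in> chars_trivial_on (adjoin U b) T"
    and eq: "char_restrict U \<chi>1 = char_restrict U \<chi>2" "\<chi>1 b = \<chi>2 b"
  shows "\<chi>1 = \<chi>2"
proof
  fix x
  show "\<chi>1 x = \<chi>2 x"
  proof (cases "x \<in> adjoin U b")
    case True
    then obtain u k where u: "u \<in> U" and x: "x = u + zsmult (int k) b"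
      unfolding adjoin_def by blast
    have "\<chi>1 u = \<chi>2 u"
      using fun_cong[OF eq(1), of u] u unfolding char_restrict_def by simp
    then show ?thesis
      using char_adjoin_eq[OF \<chi>(1) u] char_adjoin_eq[OF \<chi>(2) u] eq(2) x by simp
  next
    case False
    then have "\<chi>1 x = 1" "\<chi>2 x = 1"
      using \<chi> is_char_outside[OF adjoin_facts(1)] unfolding chars_trivial_on_def by blast+
    then show ?thesis
      by simp
  qed
qed

lemma bij_betw_char_restrict:
  "bij_betw (\<lambda>\<chi>. (char_restrict U \<chi>, \<chi> b)) (chars_trivial_on (adjoin U b) T)
     (SIGMA \<psi>:chars_trivial_on U T. {z. z ^ order_modulo U b = \<psi> (zsmult (int (order_modulo U b)) b)})"
proof (rule bij_betw_imageI)
  show "inj_on (\<lambda>\<chi>. (char_restrict U \<chi>, \<chi> b)) (chars_trivial_on (adjoin U b) T)"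
    using chars_adjoin_eqI by (auto intro: inj_onI)
  show "(\<lambda>\<chi>. (char_restrict U \<chi>, \<chi> b)) ` chars_trivial_on (adjoin U b) T
      = (SIGMA \<psi>:chars_trivial_on U T. {z. z ^ order_modulo U b = \<psi> (zsmult (int (order_modulo U b)) b)})"
  proof
    show "(\<lambda>\<chi>. (char_restrict U \<chi>, \<chi> b)) ` chars_trivial_on (adjoin U b) T
        \<subseteq> (SIGMA \<psi>:chars_trivial_on U T. {z. z ^ order_modulo U b = \<psi> (zsmult (int (order_modulo U b)) b)})"
      by (rule image_subsetI) (simp add: char_restrict_in char_power_order_modulo)
  next
    show "(SIGMA \<psi>:chars_trivial_on U T. {z. z ^ order_modulo U b = \<psi> (zsmult (int (order_modulo U b)) b)})
        \<subseteq> (\<lambda>\<chi>. (char_restrict U \<chi>, \<chi> b)) ` chars_trivial_on (adjoin U b) T"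
    proof (rule subsetI, elim SigmaE)
      fix p \<psi> z
      assume \<psi>: "\<psi> \<in> chars_trivial_on U T"
        and "z \<in> {z. z ^ order_modulo U b = \<psi> (zsmult (int (order_modulo U b)) b)}" and p: "p = (\<psi>, z)"
      then obtain \<chi> where "\<chi> \<in> chars_trivial_on (adjoin U b) T" "char_restrict U \<chi> = \<psi>" "\<chi> b = z"
        using char_extend[OF \<psi>] by blast
      with p show "p \<in> (\<lambda>\<chi>. (char_restrict U \<chi>, \<chi> b)) ` chars_trivial_on (adjoin U b) T"
        by (intro rev_image_eqI[of \<chi>]) simp_all
    qed
  qed
qed

lemma card_chars_adjoin:
  assumes fin_chars: "finite (chars_trivial_on U T)"
  shows "finite (chars_trivial_on (adjoin U b) T)"
    and "card (chars_trivial_on (adjoin U b) T) = order_modulo U b * card (chars_trivial_on U T)"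
proof -
  let ?m = "order_modulo U b"
  let ?roots = "\<lambda>\<psi>. {z. z ^ ?m = \<psi> (zsmult (int ?m) b)}"
  have card_roots: "card (?roots \<psi>) = ?m" if "\<psi> \<in> chars_trivial_on U T" for \<psi>
  proof (rule card_nth_roots[OF is_char_nonzero[OF U] adjoin_facts(4)])
    show "is_char U \<psi>"
      using that unfolding chars_trivial_on_def by blast
  qed
  have finite_roots: "finite (?roots \<psi>)" if "\<psi> \<in> chars_trivial_on U T" for \<psi>
    using card_roots[OF that] adjoin_facts(4) by (intro card_ge_0_finite) simp
  have "finite (Sigma (chars_trivial_on U T) ?roots)"
    using fin_chars finite_roots by (rule finite_SigmaI)
  then show "finite (chars_trivial_on (adjoin U b) T)"
    using bij_betw_finite[OF bij_betw_char_restrict] by blast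
  have "card (Sigma (chars_trivial_on U T) ?roots) = (\<Sum>\<psi>\<in>chars_trivial_on U T. card (?roots \<psi>))"
    by (rule card_SigmaI[OF fin_chars]) (use finite_roots in blast)
  also have "\<dots> = ?m * card (chars_trivial_on U T)"
    using card_roots by simp
  finally show "card (chars_trivial_on (adjoin U b) T) = ?m * card (chars_trivial_on U T)"
    using bij_betw_same_card[OF bij_betw_char_restrict] by simp
qed

end

lemma chars_trivial_on_self: "add_subgroup T \<Longrightarrow> chars_trivial_on T T = {\<lambda>_. 1}"
  unfolding chars_trivial_on_def is_char_def by (auto simp: fun_eq_iff) metis

lemma card_chars_trivial_on:
  fixes S T :: "'a::ab_group_add set"
  assumes fin: "finite S" and S: "add_subgroup S" and T: "add_subgroup T" and TS: "T \<subseteq> S"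
  shows "finite (chars_trivial_on S T)" and "card (chars_trivial_on S T) * card T = card S"
proof -
  \<comment> \<open>adjoin elements of \<open>S\<close> one at a time, starting from \<open>U = T\<close>\<close>
  have "finite (chars_trivial_on S T) \<and> card (chars_trivial_on S T) * card U = card (chars_trivial_on U T) * card S"
    if "add_subgroup U" "T \<subseteq> U" "U \<subseteq> S" "finite (chars_trivial_on U T)" for U
    using that
  proof (induction "card S - card U" arbitrary: U rule: less_induct)
    case (less U)
    show ?case
    proof (cases "U = S")
      case False
      then obtain b where b: "b \<in> S" "b \<notin> U"
        using less.prems(3) by blast
      note adjoin = add_subgroup_adjoin[OF fin S less.prems(1,3) b(1)]
        subset_adjoin[OF fin S less.prems(1,3) b(1)] mem_adjoin[OF fin S less.prems(1,3) b(1)]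
        adjoin_subset[OF fin S less.prems(1,3) b(1)] card_adjoin[OF fin S less.prems(1,3) b(1)]
        order_modulo_pos[OF fin S less.prems(1,3) b(1)]
      note step = card_chars_adjoin[OF fin S less.prems(1,3) b(1) less.prems(2,4)]
      have "U \<subset> adjoin U b"
        using adjoin(2,3) b(2) by blast
      then have "card U < card (adjoin U b)"
        using finite_subset[OF adjoin(4) fin] by (rule psubset_card_mono[rotated])
      moreover have "card (adjoin U b) \<le> card S"
        using adjoin(4) fin by (rule card_mono[rotated])
      ultimately have "card S - card (adjoin U b) < card S - card U"
        by linarith
      then have IH: "finite (chars_trivial_on S T) \<and> card (chars_trivial_on S T) * card (adjoin U b)
          = card (chars_trivial_on (adjoin U b) T) * card S"
        using less.hyps adjoin less.prems(2) step(1) by blast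
      then show ?thesis
        using step(2) adjoin(5,6) by (simp add: algebra_simps)
    qed (use less.prems in simp)
  qed
  from this[OF T order_refl TS] show "finite (chars_trivial_on S T)" "card (chars_trivial_on S T) * card T = card S"
    by (simp_all add: chars_trivial_on_self[OF T])
qed

lemma chars_separate:
  fixes S :: "'a::ab_group_add set"
  assumes fin: "finite S" and S: "add_subgroup S" and a: "a \<in> S" "a \<noteq> 0"
  obtains \<chi> where "is_char S \<chi>" "\<chi> a \<noteq> 1"
proof -
  have zero: "add_subgroup {0}" "{0} \<subseteq> S"
    using add_subgroup_zero[OF S] by (auto simp: add_subgroup_def)
  note A = adjoin_subset[OF fin S zero a(1)] add_subgroup_adjoin[OF fin S zero a(1)]
    subset_adjoin[OF fin S zero a(1)] mem_adjoin[OF fin S zero a(1)]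
  have "card {0, a} \<le> card (adjoin {0} a)"
    using A fin by (intro card_mono) (auto intro: finite_subset)
  then have two: "2 \<le> card (adjoin {0} a)"
    using a(2) by simp
  have "\<exists>\<chi>. is_char S \<chi> \<and> \<chi> a \<noteq> 1"
  proof (rule ccontr)
    assume "\<nexists>\<chi>. is_char S \<chi> \<and> \<chi> a \<noteq> 1"
    then have triv: "\<chi> a = 1" if "is_char S \<chi>" for \<chi>
      using that by blast
    \<comment> \<open>then every character is trivial on \<open>\<langle>a\<rangle>\<close>, contradicting the count of characters\<close>
    have "\<chi> x = 1" if \<chi>: "is_char S \<chi>" and x: "x \<in> adjoin {0} a" for \<chi> x
    proof -
      obtain k where "x = 0 + zsmult (int k) a"
        using x unfolding adjoin_def by blast
      then show ?thesis
        using is_char_power[OF S \<chi> a(1)] triv[OF \<chi>] by simp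
    qed
    then have "chars_trivial_on S (adjoin {0} a) = chars_trivial_on S {0}"
      unfolding chars_trivial_on_def using is_char_zero[OF S] by blast
    then have "card (chars_trivial_on S {0}) * card (adjoin {0} a) = card (chars_trivial_on S {0}) * 1"
      using card_chars_trivial_on(2)[OF fin S A(2) A(1)] card_chars_trivial_on(2)[OF fin S zero] by simp
    moreover have "card S \<noteq> 0"
      using a(1) fin by auto
    then have "card (chars_trivial_on S {0}) \<noteq> 0"
      using card_chars_trivial_on(2)[OF fin S zero] by auto
    ultimately show False
      using two by simp
  qed
  with that show thesis
    by blast
qed

lemma sum_chars:
  fixes S :: "'a::ab_group_add set"
  assumes fin: "finite S" and S: "add_subgroup S" and a: "a \<in> S"
  shows "(\<Sum>\<chi>\<in>{\<chi>. is_char S \<chi>}. \<chi> a) = (if a = 0 then of_nat (card {\<chi>. is_char S \<chi>}) else 0)"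
proof (cases "a = 0")
  case True
  have "(\<Sum>\<chi>\<in>{\<chi>. is_char S \<chi>}. \<chi> 0) = (\<Sum>\<chi>\<in>{\<chi>. is_char S \<chi>}. 1)"
    using is_char_zero[OF S] by (intro sum.cong) simp_all
  with True show ?thesis
    by simp
next
  case False
  let ?C = "{\<chi>. is_char S \<chi>}"
  obtain \<chi>0 where \<chi>0: "is_char S \<chi>0" "\<chi>0 a \<noteq> 1"
    using chars_separate[OF fin S a False] by blast
  have cancel: "cnj (\<chi>0 x) * (\<chi>0 x * w) = w" "\<chi>0 x * (cnj (\<chi>0 x) * w) = w" for x w
  proof -
    have "cnj (\<chi>0 x) * \<chi>0 x = 1"
      using is_char_mult_cnj[OF S \<chi>0(1), of x] by (simp only: mult.commute)
    then show "cnj (\<chi>0 x) * (\<chi>0 x * w) = w" "\<chi>0 x * (cnj (\<chi>0 x) * w) = w"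
      using is_char_mult_cnj[OF S \<chi>0(1), of x] by (simp_all only: mult.assoc[symmetric] mult_1_left)
  qed
  have bij: "bij_betw (\<lambda>\<chi> x. \<chi>0 x * \<chi> x) ?C ?C"
  proof (rule bij_betwI[where g = "\<lambda>\<chi> x. cnj (\<chi>0 x) * \<chi> x"])
    show "(\<lambda>\<chi> x. \<chi>0 x * \<chi> x) \<in> ?C \<rightarrow> ?C"
      using is_char_mult[OF \<chi>0(1)] by (simp add: Pi_def)
    show "(\<lambda>\<chi> x. cnj (\<chi>0 x) * \<chi> x) \<in> ?C \<rightarrow> ?C"
      using is_char_mult[OF is_char_cnj[OF \<chi>0(1)]] by (simp add: Pi_def)
  qed (simp_all only: cancel)
  have "(\<Sum>\<chi>\<in>?C. \<chi>0 a * \<chi> a) = (\<Sum>\<chi>\<in>?C. \<chi> a)"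
    using sum.reindex_bij_betw[OF bij, of "\<lambda>\<chi>. \<chi> a"] by simp
  then have "\<chi>0 a * (\<Sum>\<chi>\<in>?C. \<chi> a) = (\<Sum>\<chi>\<in>?C. \<chi> a)"
    by (simp only: sum_distrib_left)
  then have "(1 - \<chi>0 a) * (\<Sum>\<chi>\<in>?C. \<chi> a) = 0"
    by (simp only: left_diff_distrib mult_1_left diff_self)
  with \<chi>0(2) False show ?thesis
    by simp
qed

section \<open>Counting cosets and kernels\<close>

lemma (in group) card_lcosets_in_subgroup:
  assumes H: "subgroup H G" and K: "subgroup K G" "K \<subseteq> H" and fin: "finite H"
  shows "card ((\<lambda>a. (\<lambda>k. a \<otimes> k) ` K) ` H) * card K = card H"
proof -
  interpret H: group "G\<lparr>carrier := H\<rparr>"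
    using subgroup.subgroup_is_group[OF H is_group] .
  have "card (lcosets\<^bsub>G\<lparr>carrier := H\<rparr>\<^esub> K) * card K = order (G\<lparr>carrier := H\<rparr>)"
    using H.l_lagrange fin subgroup_incl[OF K(1) H K(2)] by simp
  moreover have "lcosets\<^bsub>G\<lparr>carrier := H\<rparr>\<^esub> K = (\<lambda>a. (\<lambda>k. a \<otimes> k) ` K) ` H"
    by (auto simp: LCOSETS_def l_coset_def)
  ultimately show ?thesis
    by (simp add: order_def)
qed

lemma (in group_hom) card_image_mult_card_kernel:
  assumes "finite (carrier G)"
  shows "card (h ` carrier G) * card (kernel G H h) = card (carrier G)"
proof -
  have image: "the_elem (h ` (kernel G H h #> g)) = h g" if g: "g \<in> carrier G" for g
  proof -
    have "h ` (kernel G H h #> g) \<subseteq> {h g}"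
      using g by (auto simp: kernel_def r_coset_def)
    moreover have "\<one> \<otimes> g \<in> kernel G H h #> g"
      using g by (auto simp: kernel_def r_coset_def)
    then have "h g \<in> h ` (kernel G H h #> g)"
      using g by (metis imageI G.l_one)
    ultimately have "h ` (kernel G H h #> g) = {h g}"
      by blast
    then show ?thesis
      by simp
  qed
  \<comment> \<open>first isomorphism theorem: the cosets of the kernel correspond to the image\<close>
  have "bij_betw (\<lambda>X. the_elem (h ` X)) (carrier (G Mod kernel G H h)) (h ` carrier G)"
  proof (rule bij_betw_imageI)
    show "inj_on (\<lambda>X. the_elem (h ` X)) (carrier (G Mod kernel G H h))"
      by (rule FactGroup_inj_on)
    have "(\<lambda>X. the_elem (h ` X)) ` carrier (G Mod kernel G H h)
        = (\<lambda>g. the_elem (h ` (kernel G H h #> g))) ` carrier G"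
      by (simp add: FactGroup_def RCOSETS_def image_UN UNION_singleton_eq_range image_image)
    also have "\<dots> = h ` carrier G"
      using image by (rule image_cong[OF refl])
    finally show "(\<lambda>X. the_elem (h ` X)) ` carrier (G Mod kernel G H h) = h ` carrier G" .
  qed
  then have "card (h ` carrier G) = card (rcosets kernel G H h)"
    by (simp add: bij_betw_same_card FactGroup_def)
  then show ?thesis
    using G.lagrange[OF subgroup_kernel] by (simp add: order_def)
qed

definition additive_group :: "'a::ab_group_add monoid" where
  "additive_group = \<lparr>carrier = UNIV, mult = (+), one = 0\<rparr>"

lemma additive_group_simps [simp]:
  "carrier additive_group = UNIV" "a \<otimes>\<^bsub>additive_group\<^esub> b = a + b" "\<one>\<^bsub>additive_group\<^esub> = 0"
  by (simp_all add: additive_group_def)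

lemma comm_group_additive_group: "comm_group (additive_group :: 'a::ab_group_add monoid)"
proof (rule comm_groupI)
  fix x :: 'a
  show "\<exists>y\<in>carrier additive_group. y \<otimes>\<^bsub>additive_group\<^esub> x = \<one>\<^bsub>additive_group\<^esub>"
    by (intro bexI[of _ "- x"]) simp_all
qed (simp_all add: add.assoc add.commute)

interpretation additive_group: comm_group "additive_group :: 'a::ab_group_add monoid"
  by (rule comm_group_additive_group)

lemma inv_additive_group [simp]: "inv\<^bsub>additive_group\<^esub> a = - a"
  by (rule additive_group.inv_equality) simp_all

lemma subgroup_additive_group_iff: "subgroup S additive_group \<longleftrightarrow> add_subgroup S"
  unfolding subgroup_def add_subgroup_def by auto

lemma card_add_cosets:
  fixes B Z :: "'a::ab_group_add set"
  assumes "finite Z" "add_subgroup Z" "add_subgroup B" "B \<subseteq> Z"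
  shows "card ((\<lambda>\<omega>. (+) \<omega> ` B) ` Z) * card B = card Z"
  using additive_group.card_lcosets_in_subgroup[of Z B] assms
  by (simp add: subgroup_additive_group_iff)

lemma card_image_mult_card_zeros:
  fixes f :: "'a::ab_group_add \<Rightarrow> 'b::ab_group_add"
  assumes "finite S" "add_subgroup S" "additive_on S f"
  shows "card (f ` S) * card {a \<in> S. f a = 0} = card S"
proof -
  interpret S: group "additive_group\<lparr>carrier := S\<rparr>"
    using assms(2) by (intro subgroup.subgroup_is_group) (simp_all add: subgroup_additive_group_iff
      additive_group.is_group)
  interpret group_hom "additive_group\<lparr>carrier := S\<rparr>" additive_group f
    using assms(3) by unfold_locales (simp add: hom_def additive_onD[OF assms(2)])
  show ?thesis
    using card_image_mult_card_kernel assms(1) by (simp add: kernel_def)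
qed

section \<open>Functions constant on the blocks of a partition\<close>

lemma indicator_block:
  assumes "pairwise disjnt P" "C \<in> P" "C' \<in> P" "x \<in> C'"
  shows "indicator C x = (if C = C' then 1 else (0 :: 'b::zero_neq_one))"
  using assms by (auto simp: indicator_def pairwise_def disjnt_def)

context
  fixes P :: "'a set set" and r :: "'a set \<Rightarrow> 'a"
  assumes fin: "finite P" and disj: "pairwise disjnt P" and r: "\<And>C. C \<in> P \<Longrightarrow> r C \<in> C"
begin

private lemmas indicator_block' = indicator_block[OF disj, where 'b = complex]

lemma block_constant_eq_sum_indicators:
  fixes f :: "'a \<Rightarrow> complex"
  assumes f0: "\<And>x. x \<notin> \<Union>P \<Longrightarrow> f x = 0"
    and f_const: "\<And>C x y. C \<in> P \<Longrightarrow> x \<in> C \<Longrightarrow> y \<in> C \<Longrightarrow> f x = f y"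
  shows "f = (\<Sum>C\<in>P. (\<lambda>x. f (r C) * indicator C x))"
proof
  fix x
  show "f x = (\<Sum>C\<in>P. (\<lambda>x. f (r C) * indicator C x)) x"
  proof (cases "x \<in> \<Union>P")
    case True
    then obtain C0 where C0: "C0 \<in> P" "x \<in> C0"
      by blast
    have "(\<Sum>C\<in>P. f (r C) * indicator C x) = (\<Sum>C\<in>P. if C = C0 then f (r C) else 0)"
      using indicator_block'[OF _ C0] by (intro sum.cong) simp_all
    also have "\<dots> = f (r C0)"
      using fin C0(1) by (simp add: sum.delta')
    also have "\<dots> = f x"
      by (rule f_const[OF C0(1) r[OF C0(1)] C0(2)])
    finally show ?thesis
      by (simp add: sum_fun_apply)
  next
    case False
    then have "indicator C x = (0 :: complex)" if "C \<in> P" for C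
      using that by (auto simp: indicator_def)
    then show ?thesis
      using f0[OF False] by (simp add: sum_fun_apply)
  qed
qed

lemma indicators_independent:
  assumes "T \<subseteq> (\<lambda>C. indicator C :: 'a \<Rightarrow> complex) ` P" "finite T"
    and sum: "(\<Sum>v\<in>T. (\<lambda>x. u v * v x)) = 0" and C0: "C0 \<in> P" "indicator C0 \<in> T"
  shows "u (indicator C0) = 0"
proof -
  have "0 = (\<Sum>v\<in>T. u v * v (r C0))"
    using fun_cong[OF sum, of "r C0"] by (simp add: sum_fun_apply)
  also have "\<dots> = (\<Sum>v\<in>T. if v = indicator C0 then u v else 0)"
  proof (rule sum.cong[OF refl])
    fix v assume "v \<in> T"
    then obtain C where C: "C \<in> P" "v = indicator C"
      using assms(1) by blast
    have "C = C0" if "indicator C = (indicator C0 :: 'a \<Rightarrow> complex)"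
      using fun_cong[OF that, of "r C0"] indicator_block'[OF C(1) C0(1) r[OF C0(1)]]
        indicator_block'[OF C0(1) C0(1) r[OF C0(1)]]
      by (simp split: if_splits)
    then show "u v * v (r C0) = (if v = indicator C0 then u v else 0)"
      using indicator_block'[OF C(1) C0(1) r[OF C0(1)]] C(2) by auto
  qed
  also have "\<dots> = u (indicator C0)"
    using assms(2) C0(2) by simp
  finally show ?thesis ..
qed

lemma inj_on_indicator: "inj_on (\<lambda>C. indicator C :: 'a \<Rightarrow> complex) P"
proof (rule inj_onI)
  fix C C' assume C: "C \<in> P" "C' \<in> P" and eq: "(indicator C :: 'a \<Rightarrow> complex) = indicator C'"
  have "indicator C' (r C) = (indicator C (r C) :: complex)"
    using eq by simp
  then show "C = C'"
    using indicator_block'[OF C(2) C(1) r[OF C(1)]] indicator_block'[OF C(1) C(1) r[OF C(1)]]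
    by (simp split: if_splits)
qed

end

lemma cdim_block_constant:
  fixes P :: "'a set set"
  assumes fin: "finite P" and nonempty: "{} \<notin> P" and disj: "pairwise disjnt P"
  shows "cdim {f. (\<forall>x. x \<notin> \<Union>P \<longrightarrow> f x = 0) \<and> (\<forall>C\<in>P. \<forall>x\<in>C. \<forall>y\<in>C. f x = f y)} = card P"
proof -
  interpret V: vector_space "\<lambda>(a::complex) (f::'a \<Rightarrow> complex) x. a * f x"
    by unfold_locales (simp_all add: fun_eq_iff algebra_simps)
  let ?V = "{f :: 'a \<Rightarrow> complex. (\<forall>x. x \<notin> \<Union>P \<longrightarrow> f x = 0) \<and> (\<forall>C\<in>P. \<forall>x\<in>C. \<forall>y\<in>C. f x = f y)}"
  let ?E = "(\<lambda>C. indicator C :: 'a \<Rightarrow> complex) ` P"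
  define r where "r C = (SOME x. x \<in> C)" for C :: "'a set"
  have r: "r C \<in> C" if "C \<in> P" for C
    using that nonempty unfolding r_def by (metis ex_in_conv someI)
  have "?E \<subseteq> ?V"
  proof (rule image_subsetI, unfold mem_Collect_eq, intro conjI allI impI ballI)
    fix C x assume "C \<in> P" "x \<notin> \<Union>P"
    then show "indicator C x = (0 :: complex)"
      by (auto simp: indicator_def)
  next
    fix C C' x y assume "C \<in> P" "C' \<in> P" "x \<in> C'" "y \<in> C'"
    then show "indicator C x = (indicator C y :: complex)"
      using indicator_block[OF disj, where 'b = complex] by simp
  qed
  moreover have "?V \<subseteq> V.span ?E"
  proof
    fix f assume "f \<in> ?V"
    then have "f = (\<Sum>C\<in>P. (\<lambda>x. f (r C) * indicator C x))"
      by (intro block_constant_eq_sum_indicators[OF fin disj r]) blast+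
    also have "\<dots> \<in> V.span ?E"
      by (intro V.span_sum V.span_scale V.span_base) simp
    finally show "f \<in> V.span ?E" .
  qed
  moreover have "\<not> V.dependent ?E"
    unfolding V.dependent_explicit using indicators_independent[OF fin disj r] by blast
  moreover have "card ?E = card P"
    by (rule card_image[OF inj_on_indicator[OF fin disj r]])
  ultimately show ?thesis
    unfolding cdim_def by (rule V.dim_unique)
qed

context
  fixes Z B :: "'a::ab_group_add set"
  assumes Z: "add_subgroup Z" and B: "add_subgroup B" "B \<subseteq> Z"
begin

lemma add_coset_eq:
  assumes "\<omega> - \<omega>' \<in> B"
  shows "(+) \<omega> ` B = (+) \<omega>' ` B"
proof
  show "(+) \<omega> ` B \<subseteq> (+) \<omega>' ` B"
  proof
    fix x assume "x \<in> (+) \<omega> ` B"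
    then obtain b where "b \<in> B" "x = \<omega> + b" by blast
    then show "x \<in> (+) \<omega>' ` B"
      using add_subgroup_add[OF B(1) assms] by (intro image_eqI[of _ _ "(\<omega> - \<omega>') + b"]) simp_all
  qed
  show "(+) \<omega>' ` B \<subseteq> (+) \<omega> ` B"
  proof
    fix x assume "x \<in> (+) \<omega>' ` B"
    then obtain b where "b \<in> B" "x = \<omega>' + b" by blast
    then show "x \<in> (+) \<omega> ` B"
      using add_subgroup_diff[OF B(1) _ assms] by (intro image_eqI[of _ _ "b - (\<omega> - \<omega>')"]) simp_all
  qed
qed

lemma pairwise_disjnt_add_cosets: "pairwise disjnt ((\<lambda>\<omega>. (+) \<omega> ` B) ` Z)"
proof (rule pairwiseI)
  fix C C' assume "C \<in> (\<lambda>\<omega>. (+) \<omega> ` B) ` Z" "C' \<in> (\<lambda>\<omega>. (+) \<omega> ` B) ` Z" "C \<noteq> C'"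
  then obtain \<omega> \<omega>' where C: "C = (+) \<omega> ` B" "C' = (+) \<omega>' ` B"
    by blast
  show "disjnt C C'"
    unfolding disjnt_def
  proof (rule ccontr)
    assume "C \<inter> C' \<noteq> {}"
    then obtain y where "y \<in> (+) \<omega> ` B" "y \<in> (+) \<omega>' ` B"
      unfolding C by blast
    then obtain b b' where "b \<in> B" "b' \<in> B" "\<omega> + b = \<omega>' + b'"
      by (elim imageE) simp
    then have "\<omega> - \<omega>' = b' - b"
      by (simp add: algebra_simps)
    then have "C = C'"
      using C add_coset_eq[of \<omega> \<omega>'] add_subgroup_diff[OF B(1) \<open>b' \<in> B\<close> \<open>b \<in> B\<close>] by simp
    with \<open>C \<noteq> C'\<close> show False ..
  qed
qed

lemma Union_add_cosets: "\<Union>((\<lambda>\<omega>. (+) \<omega> ` B) ` Z) = Z"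
proof
  show "\<Union>((\<lambda>\<omega>. (+) \<omega> ` B) ` Z) \<subseteq> Z"
    using add_subgroup_add[OF Z] B(2) by (auto simp: subset_iff)
  show "Z \<subseteq> \<Union>((\<lambda>\<omega>. (+) \<omega> ` B) ` Z)"
  proof
    fix \<omega> assume "\<omega> \<in> Z"
    moreover have "\<omega> \<in> (+) \<omega> ` B"
      using imageI[OF add_subgroup_zero[OF B(1)], of "(+) \<omega>"] by simp
    ultimately show "\<omega> \<in> \<Union>((\<lambda>\<omega>. (+) \<omega> ` B) ` Z)"
      by (intro UnionI[OF imageI])
  qed
qed

lemma empty_notin_add_cosets: "{} \<notin> (\<lambda>\<omega>. (+) \<omega> ` B) ` Z"
proof
  assume "{} \<in> (\<lambda>\<omega>. (+) \<omega> ` B) ` Z"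
  then obtain \<omega> where "(+) \<omega> ` B = {}"
    by (rule imageE) simp
  with add_subgroup_zero[OF B(1)] show False
    by simp
qed

lemma constant_on_add_cosets_iff:
  fixes f :: "'a \<Rightarrow> 'b::zero"
  assumes f0: "\<And>\<omega>. \<omega> \<notin> Z \<Longrightarrow> f \<omega> = 0"
  shows "(\<forall>C\<in>(\<lambda>\<omega>. (+) \<omega> ` B) ` Z. \<forall>x\<in>C. \<forall>y\<in>C. f x = f y) \<longleftrightarrow> (\<forall>\<omega>. \<forall>b\<in>B. f (\<omega> + b) = f \<omega>)"
proof
  assume const: "\<forall>C\<in>(\<lambda>\<omega>. (+) \<omega> ` B) ` Z. \<forall>x\<in>C. \<forall>y\<in>C. f x = f y"
  show "\<forall>\<omega>. \<forall>b\<in>B. f (\<omega> + b) = f \<omega>"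
  proof (intro allI ballI)
    fix \<omega> b assume b: "b \<in> B"
    show "f (\<omega> + b) = f \<omega>"
    proof (cases "\<omega> \<in> Z")
      case True
      have "(+) \<omega> ` B \<in> (\<lambda>\<omega>. (+) \<omega> ` B) ` Z"
        using True by (rule imageI)
      moreover have "\<omega> + b \<in> (+) \<omega> ` B"
        using b by (rule imageI)
      moreover have "\<omega> \<in> (+) \<omega> ` B"
        using imageI[OF add_subgroup_zero[OF B(1)], of "(+) \<omega>"] by simp
      ultimately show ?thesis
        by (rule const[rule_format])
    next
      case False
      have "\<omega> + b \<notin> Z"
      proof
        assume "\<omega> + b \<in> Z"
        then have "(\<omega> + b) - b \<in> Z"
          by (rule add_subgroup_diff[OF Z _ subsetD[OF B(2) b]])
        with False show False
          by simp
      qed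
      with False show ?thesis
        by (simp add: f0)
    qed
  qed
next
  assume periodic: "\<forall>\<omega>. \<forall>b\<in>B. f (\<omega> + b) = f \<omega>"
  show "\<forall>C\<in>(\<lambda>\<omega>. (+) \<omega> ` B) ` Z. \<forall>x\<in>C. \<forall>y\<in>C. f x = f y"
  proof (intro ballI)
    fix C x y assume "C \<in> (\<lambda>\<omega>. (+) \<omega> ` B) ` Z" "x \<in> C" "y \<in> C"
    obtain \<omega> where C: "C = (+) \<omega> ` B"
      using \<open>C \<in> (\<lambda>\<omega>. (+) \<omega> ` B) ` Z\<close> by (rule imageE)
    obtain b where "b \<in> B" "x = \<omega> + b"
      using \<open>x \<in> C\<close> unfolding C by (rule imageE)
    moreover obtain b' where "b' \<in> B" "y = \<omega> + b'"
      using \<open>y \<in> C\<close> unfolding C by (rule imageE)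
    ultimately show "f x = f y"
      using periodic by simp
  qed
qed

lemma cdim_periodic_functions:
  assumes fin: "finite Z"
  shows "cdim {f. (\<forall>\<omega>. \<omega> \<notin> Z \<longrightarrow> f \<omega> = 0) \<and> (\<forall>\<omega>. \<forall>b\<in>B. f (\<omega> + b) = f \<omega>)}
    = card ((\<lambda>\<omega>. (+) \<omega> ` B) ` Z)"
proof -
  let ?P = "(\<lambda>\<omega>. (+) \<omega> ` B) ` Z"
  have "{f :: 'a \<Rightarrow> complex. (\<forall>\<omega>. \<omega> \<notin> Z \<longrightarrow> f \<omega> = 0) \<and> (\<forall>\<omega>. \<forall>b\<in>B. f (\<omega> + b) = f \<omega>)}
      = {f. (\<forall>x. x \<notin> \<Union>?P \<longrightarrow> f x = 0) \<and> (\<forall>C\<in>?P. \<forall>x\<in>C. \<forall>y\<in>C. f x = f y)}"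
    unfolding Union_add_cosets
  proof (rule Collect_cong)
    fix f :: "'a \<Rightarrow> complex"
    show "((\<forall>\<omega>. \<omega> \<notin> Z \<longrightarrow> f \<omega> = 0) \<and> (\<forall>\<omega>. \<forall>b\<in>B. f (\<omega> + b) = f \<omega>))
        \<longleftrightarrow> ((\<forall>x. x \<notin> Z \<longrightarrow> f x = 0) \<and> (\<forall>C\<in>?P. \<forall>x\<in>C. \<forall>y\<in>C. f x = f y))"
    proof (cases "\<forall>\<omega>. \<omega> \<notin> Z \<longrightarrow> f \<omega> = 0")
      case True
      then show ?thesis
        using constant_on_add_cosets_iff[of f] by simp
    next
      case False
      then show ?thesis
        by blast
    qed
  qed
  also have "cdim \<dots> = card ?P"
    using finite_imageI[OF fin] empty_notin_add_cosets pairwise_disjnt_add_cosets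
    by (rule cdim_block_constant)
  finally show ?thesis .
qed

end

section \<open>Cochains and their characters\<close>

definition cells :: "(int \<Rightarrow> 'k set) \<Rightarrow> (int \<times> 'k) set" where
  "cells K = Sigma {n. K n \<noteq> {}} K"

definition point_cochain :: "int \<Rightarrow> 'k \<Rightarrow> 'g::zero \<Rightarrow> int \<Rightarrow> 'k \<Rightarrow> 'g" where
  "point_cochain n x a = (\<lambda>n' x'. if n' = n \<and> x' = x then a else 0)"

definition pairing_char :: "(int \<Rightarrow> 'k set) \<Rightarrow> (int \<Rightarrow> 'g::ab_group_add set) \<Rightarrow> int
    \<Rightarrow> (int \<Rightarrow> 'k \<Rightarrow> 'g \<Rightarrow> complex) \<Rightarrow> (int \<Rightarrow> 'k \<Rightarrow> 'g) \<Rightarrow> complex" where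
  "pairing_char K G p \<rho> = (\<lambda>\<omega>. if \<omega> \<in> homU K G p then pairing K \<rho> \<omega> else 1)"

definition homL_of_char :: "(int \<Rightarrow> 'k set) \<Rightarrow> (int \<Rightarrow> 'g::ab_group_add set) \<Rightarrow> int
    \<Rightarrow> ((int \<Rightarrow> 'k \<Rightarrow> 'g) \<Rightarrow> complex) \<Rightarrow> int \<Rightarrow> 'k \<Rightarrow> 'g \<Rightarrow> complex" where
  "homL_of_char K G p \<chi> n x a = (if x \<in> K n \<and> a \<in> G (n - p) then \<chi> (point_cochain n x a) else 1)"

definition char_group :: "(int \<Rightarrow> 'k set) \<Rightarrow> (int \<Rightarrow> 'g::ab_group_add set) \<Rightarrow> int
    \<Rightarrow> (int \<Rightarrow> 'k \<Rightarrow> 'g \<Rightarrow> complex) monoid" where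
  "char_group K G p = \<lparr>carrier = homL K G p, mult = mulL, one = oneL\<rparr>"

definition annihilator :: "(int \<Rightarrow> 'k set) \<Rightarrow> (int \<Rightarrow> 'g::ab_group_add set) \<Rightarrow> int
    \<Rightarrow> (int \<Rightarrow> 'k \<Rightarrow> 'g) set \<Rightarrow> (int \<Rightarrow> 'k \<Rightarrow> 'g \<Rightarrow> complex) set" where
  "annihilator K G p T = {\<rho> \<in> homL K G p. \<forall>t\<in>T. pairing K \<rho> t = 1}"

locale finite_cochains =
  fixes K :: "int \<Rightarrow> 'k set"
    and G :: "int \<Rightarrow> 'g::ab_group_add set"
  assumes K_fin: "\<And>n. finite (K n)"
    and K_supp: "finite {n. K n \<noteq> {}}"
    and G_fin: "\<And>n. finite (G n)"
    and G_zero: "\<And>n. 0 \<in> G n"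
    and G_add: "\<And>n a b. a \<in> G n \<Longrightarrow> b \<in> G n \<Longrightarrow> a + b \<in> G n"
    and G_neg: "\<And>n a. a \<in> G n \<Longrightarrow> - a \<in> G n"
begin

lemma add_subgroup_G: "add_subgroup (G n)"
  unfolding add_subgroup_def using G_zero G_add G_neg by blast

lemma finite_cells: "finite (cells K)"
  unfolding cells_def using K_supp K_fin by blast

lemma mem_cells_iff [simp]: "(n, x) \<in> cells K \<longleftrightarrow> x \<in> K n"
  unfolding cells_def by auto

lemma add_subgroup_homU: "add_subgroup (homU K G p)"
  unfolding add_subgroup_def homU_def using G_zero G_add G_neg by simp

lemma homU_mem: "\<omega> \<in> homU K G p \<Longrightarrow> x \<in> K n \<Longrightarrow> \<omega> n x \<in> G (n - p)"
  and homU_outside: "\<omega> \<in> homU K G p \<Longrightarrow> x \<notin> K n \<Longrightarrow> \<omega> n x = 0"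
  unfolding homU_def by blast+

lemma homL_is_char: "\<rho> \<in> homL K G p \<Longrightarrow> x \<in> K n \<Longrightarrow> is_char (G (n - p)) (\<rho> n x)"
  and homL_outside: "\<rho> \<in> homL K G p \<Longrightarrow> x \<notin> K n \<Longrightarrow> \<rho> n x = (\<lambda>_. 1)"
  unfolding homL_def by blast+

lemma finite_homU: "finite (homU K G p)"
proof -
  let ?r = "\<lambda>\<omega>. restrict (\<lambda>(n, x). \<omega> n x) (cells K)"
  have "inj_on ?r (homU K G p)"
  proof (rule inj_onI, intro ext)
    fix \<omega>1 \<omega>2 n x
    assume \<omega>: "\<omega>1 \<in> homU K G p" "\<omega>2 \<in> homU K G p" and eq: "?r \<omega>1 = ?r \<omega>2"
    show "\<omega>1 n x = \<omega>2 n x"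
    proof (cases "x \<in> K n")
      case True
      then show ?thesis
        using fun_cong[OF eq, of "(n, x)"] by simp
    next
      case False
      then show ?thesis
        using homU_outside[OF \<omega>(1) False] homU_outside[OF \<omega>(2) False] by simp
    qed
  qed
  moreover have "?r ` homU K G p \<subseteq> PiE (cells K) (\<lambda>(n, x). G (n - p))"
    using homU_mem by (auto simp: PiE_def Pi_def)
  moreover have "finite (PiE (cells K) (\<lambda>(n, x). G (n - p)))"
    using finite_cells G_fin by (intro finite_PiE) auto
  ultimately show ?thesis
    by (meson finite_imageD finite_subset)
qed

lemma pairing_eq_prod_cells: "pairing K \<rho> \<omega> = (\<Prod>(n, x)\<in>cells K. \<rho> n x (\<omega> n x))"
  unfolding pairing_def cells_def using K_supp K_fin by (simp add: prod.Sigma)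

lemma prod_cells_cong:
  "(\<And>n x. x \<in> K n \<Longrightarrow> f n x = g n x) \<Longrightarrow> (\<Prod>(n, x)\<in>cells K. f n x) = (\<Prod>(n, x)\<in>cells K. g n x)"
  by (rule prod.cong) (auto simp: cells_def)

lemma pairing_add:
  assumes \<rho>: "\<rho> \<in> homL K G p" and \<omega>: "\<omega> \<in> homU K G p" "\<omega>' \<in> homU K G p"
  shows "pairing K \<rho> (\<omega> + \<omega>') = pairing K \<rho> \<omega> * pairing K \<rho> \<omega>'"
proof -
  have "\<rho> n x ((\<omega> + \<omega>') n x) = \<rho> n x (\<omega> n x) * \<rho> n x (\<omega>' n x)" if "x \<in> K n" for n x
    using is_char_add[OF add_subgroup_G homL_is_char[OF \<rho> that] homU_mem[OF \<omega>(1) that]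
        homU_mem[OF \<omega>(2) that]] by simp
  then have "(\<Prod>(n, x)\<in>cells K. \<rho> n x ((\<omega> + \<omega>') n x))
      = (\<Prod>(n, x)\<in>cells K. \<rho> n x (\<omega> n x) * \<rho> n x (\<omega>' n x))"
    by (intro prod_cells_cong) simp
  then show ?thesis
    unfolding pairing_eq_prod_cells by (simp add: prod.distrib split_def)
qed

lemma norm_pairing:
  assumes \<rho>: "\<rho> \<in> homL K G p" and \<omega>: "\<omega> \<in> homU K G p"
  shows "cmod (pairing K \<rho> \<omega>) = 1"
proof -
  have "cmod (\<rho> n x (\<omega> n x)) = 1" if "x \<in> K n" for n x
    using is_char_norm[OF add_subgroup_G homL_is_char[OF \<rho> that] homU_mem[OF \<omega> that]] .
  then have "(\<Prod>(n, x)\<in>cells K. cmod (\<rho> n x (\<omega> n x))) = (\<Prod>(n, x)\<in>cells K. 1)"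
    by (intro prod_cells_cong)
  then show ?thesis
    unfolding pairing_eq_prod_cells by (simp add: prod_norm split_def)
qed

lemma pairing_zero:
  assumes \<rho>: "\<rho> \<in> homL K G p"
  shows "pairing K \<rho> 0 = 1"
proof -
  have "\<rho> n x 0 = 1" if "x \<in> K n" for n x
    using is_char_zero[OF add_subgroup_G homL_is_char[OF \<rho> that]] .
  then have "(\<Prod>(n, x)\<in>cells K. \<rho> n x (0 n x)) = (\<Prod>(n, x)\<in>cells K. 1)"
    by (intro prod_cells_cong) simp
  then show ?thesis
    unfolding pairing_eq_prod_cells by simp
qed

lemma pairing_mulL: "pairing K (mulL \<rho> \<mu>) \<omega> = pairing K \<rho> \<omega> * pairing K \<mu> \<omega>"
  unfolding pairing_eq_prod_cells mulL_def by (simp add: prod.distrib split_def)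

lemma pairing_oneL: "pairing K oneL \<omega> = 1"
  unfolding pairing_def oneL_def by simp

lemma point_cochain_in_homU: "x \<in> K n \<Longrightarrow> a \<in> G (n - p) \<Longrightarrow> point_cochain n x a \<in> homU K G p"
  unfolding homU_def point_cochain_def using G_zero by auto

lemma point_cochain_add:
  "point_cochain n x (a + b) = point_cochain n x a + point_cochain n x (b :: 'g)"
  unfolding point_cochain_def by (simp add: fun_eq_iff)

lemma pairing_point_cochain:
  assumes \<rho>: "\<rho> \<in> homL K G p" and x: "x \<in> K n"
  shows "pairing K \<rho> (point_cochain n x a) = \<rho> n x a"
proof -
  have "(\<Prod>(n', x')\<in>cells K. \<rho> n' x' (point_cochain n x a n' x'))
      = (\<Prod>c\<in>cells K. if c = (n, x) then \<rho> n x a else 1)"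
  proof (rule prod.cong[OF refl])
    fix c assume "c \<in> cells K"
    then obtain n' x' where c: "c = (n', x')" "x' \<in> K n'"
      by (cases c) simp
    then show "(case c of (n', x') \<Rightarrow> \<rho> n' x' (point_cochain n x a n' x'))
        = (if c = (n, x) then \<rho> n x a else 1)"
      using is_char_zero[OF add_subgroup_G homL_is_char[OF \<rho> c(2)]]
      unfolding point_cochain_def by auto
  qed
  also have "\<dots> = \<rho> n x a"
    using finite_cells x by simp
  finally show ?thesis
    unfolding pairing_eq_prod_cells .
qed

lemma homU_eq_sum_point_cochains:
  assumes "\<omega> \<in> homU K G p"
  shows "\<omega> = (\<Sum>(n, x)\<in>cells K. point_cochain n x (\<omega> n x))"
proof (intro ext)
  fix n x
  have "(\<Sum>(n', x')\<in>cells K. point_cochain n' x' (\<omega> n' x')) n x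
      = (\<Sum>c\<in>cells K. if c = (n, x) then \<omega> n x else 0)"
    unfolding sum_fun_apply point_cochain_def by (intro sum.cong) (auto split: if_splits)
  also have "\<dots> = \<omega> n x"
    using finite_cells homU_outside[OF assms] by auto
  finally show "\<omega> n x = (\<Sum>(n', x')\<in>cells K. point_cochain n' x' (\<omega> n' x')) n x" ..
qed

lemma homL_eqI:
  assumes "\<rho> \<in> homL K G p" "\<mu> \<in> homL K G p"
    and eq: "\<And>\<omega>. \<omega> \<in> homU K G p \<Longrightarrow> pairing K \<rho> \<omega> = pairing K \<mu> \<omega>"
  shows "\<rho> = \<mu>"
proof (intro ext)
  fix n x a
  show "\<rho> n x a = \<mu> n x a"
  proof (cases "x \<in> K n")
    case x: True
    show ?thesis
    proof (cases "a \<in> G (n - p)")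
      case True
      then show ?thesis
        using eq[OF point_cochain_in_homU[OF x True]] pairing_point_cochain assms(1,2) x by simp
    next
      case False
      then show ?thesis
        using is_char_outside[OF add_subgroup_G homL_is_char[OF assms(1) x]]
          is_char_outside[OF add_subgroup_G homL_is_char[OF assms(2) x]] by simp
    qed
  next
    case False
    then show ?thesis
      using homL_outside[OF assms(1) False] homL_outside[OF assms(2) False] by simp
  qed
qed

context
  fixes \<chi> :: "(int \<Rightarrow> 'k \<Rightarrow> 'g) \<Rightarrow> complex" and p :: int
  assumes \<chi>: "is_char (homU K G p) \<chi>"
begin

lemma homL_of_char_in_homL: "homL_of_char K G p \<chi> \<in> homL K G p"
  unfolding homL_def
proof (intro CollectI allI conjI impI)
  note \<chi>_add = is_char_add[OF add_subgroup_homU \<chi>] and \<chi>_norm = is_char_norm[OF add_subgroup_homU \<chi>]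
  fix n x assume x: "x \<in> K n"
  show "is_char (G (n - p)) (homL_of_char K G p \<chi> n x)"
    unfolding is_char_def
  proof (intro conjI ballI allI impI)
    fix a b assume ab: "a \<in> G (n - p)" "b \<in> G (n - p)"
    then show "homL_of_char K G p \<chi> n x (a + b) = homL_of_char K G p \<chi> n x a * homL_of_char K G p \<chi> n x b"
      using \<chi>_add[OF point_cochain_in_homU[OF x ab(1)] point_cochain_in_homU[OF x ab(2)]]
      by (simp add: homL_of_char_def x G_add point_cochain_add)
  next
    fix a assume "a \<in> G (n - p)"
    then show "cmod (homL_of_char K G p \<chi> n x a) = 1"
      using \<chi>_norm[OF point_cochain_in_homU[OF x]] by (simp add: homL_of_char_def x)
  qed (simp add: homL_of_char_def)
qed (simp add: homL_of_char_def fun_eq_iff)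

lemma pairing_homL_of_char:
  assumes \<omega>: "\<omega> \<in> homU K G p"
  shows "pairing K (homL_of_char K G p \<chi>) \<omega> = \<chi> \<omega>"
proof -
  have mem: "point_cochain n x (\<omega> n x) \<in> homU K G p" if "(n, x) \<in> cells K" for n x
    using that point_cochain_in_homU homU_mem[OF \<omega>] by simp
  have "\<chi> \<omega> = \<chi> (\<Sum>(n, x)\<in>cells K. point_cochain n x (\<omega> n x))"
    using homU_eq_sum_point_cochains[OF \<omega>] by simp
  also have "\<dots> = (\<Prod>(n, x)\<in>cells K. \<chi> (point_cochain n x (\<omega> n x)))"
    using is_char_sum[OF add_subgroup_homU \<chi>, of "cells K" "\<lambda>(n, x). point_cochain n x (\<omega> n x)"]
      mem by (simp add: split_def)
  also have "\<dots> = pairing K (homL_of_char K G p \<chi>) \<omega>"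
    unfolding pairing_eq_prod_cells homL_of_char_def using homU_mem[OF \<omega>]
    by (intro prod.cong) auto
  finally show ?thesis ..
qed

end

lemma is_char_pairing_char:
  assumes \<rho>: "\<rho> \<in> homL K G p"
  shows "is_char (homU K G p) (pairing_char K G p \<rho>)"
  unfolding is_char_def pairing_char_def
  using pairing_add[OF \<rho>] norm_pairing[OF \<rho>] add_subgroup_add[OF add_subgroup_homU] by simp

lemma bij_betw_pairing_char:
  "bij_betw (pairing_char K G p) (homL K G p) {\<chi>. is_char (homU K G p) \<chi>}"
proof (rule bij_betw_imageI)
  show "inj_on (pairing_char K G p) (homL K G p)"
  proof (rule inj_onI)
    fix \<rho> \<mu> assume "\<rho> \<in> homL K G p" "\<mu> \<in> homL K G p" "pairing_char K G p \<rho> = pairing_char K G p \<mu>"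
    then show "\<rho> = \<mu>"
      by (intro homL_eqI[of \<rho> p \<mu>]) (simp_all add: pairing_char_def fun_eq_iff, metis)
  qed
  show "pairing_char K G p ` homL K G p = {\<chi>. is_char (homU K G p) \<chi>}"
  proof
    show "pairing_char K G p ` homL K G p \<subseteq> {\<chi>. is_char (homU K G p) \<chi>}"
      using is_char_pairing_char by blast
    show "{\<chi>. is_char (homU K G p) \<chi>} \<subseteq> pairing_char K G p ` homL K G p"
    proof
      fix \<chi> assume "\<chi> \<in> {\<chi>. is_char (homU K G p) \<chi>}"
      then have \<chi>: "is_char (homU K G p) \<chi>" by simp
      have "\<chi> = pairing_char K G p (homL_of_char K G p \<chi>)"
        using pairing_homL_of_char[OF \<chi>] is_char_outside[OF add_subgroup_homU \<chi>]
        by (auto simp: pairing_char_def fun_eq_iff)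
      then show "\<chi> \<in> pairing_char K G p ` homL K G p"
        using homL_of_char_in_homL[OF \<chi>] by (rule image_eqI)
    qed
  qed
qed

lemma finite_homL: "finite (homL K G p)"
  and card_homL: "card (homL K G p) = card (homU K G p)"
proof -
  have "chars_trivial_on (homU K G p) {0} = {\<chi>. is_char (homU K G p) \<chi>}"
    unfolding chars_trivial_on_def using is_char_zero[OF add_subgroup_homU] by blast
  moreover have zero: "add_subgroup {0 :: int \<Rightarrow> 'k \<Rightarrow> 'g}" "{0} \<subseteq> homU K G p"
    using add_subgroup_zero[OF add_subgroup_homU] by (auto simp: add_subgroup_def)
  ultimately have "finite {\<chi>. is_char (homU K G p) \<chi>}" "card {\<chi>. is_char (homU K G p) \<chi>} = card (homU K G p)"
    using card_chars_trivial_on[OF finite_homU add_subgroup_homU zero] by simp_all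
  then show "finite (homL K G p)" "card (homL K G p) = card (homU K G p)"
    using bij_betw_finite[OF bij_betw_pairing_char] bij_betw_same_card[OF bij_betw_pairing_char] by simp_all
qed

lemma sum_pairing:
  assumes v: "v \<in> homU K G p"
  shows "(\<Sum>\<rho>\<in>homL K G p. pairing K \<rho> v) = (if v = 0 then of_nat (card (homL K G p)) else 0)"
proof -
  have "(\<Sum>\<rho>\<in>homL K G p. pairing K \<rho> v) = (\<Sum>\<rho>\<in>homL K G p. pairing_char K G p \<rho> v)"
    using v unfolding pairing_char_def by simp
  also have "\<dots> = (\<Sum>\<chi>\<in>{\<chi>. is_char (homU K G p) \<chi>}. \<chi> v)"
    by (rule sum.reindex_bij_betw[OF bij_betw_pairing_char])
  also have "\<dots> = (if v = 0 then of_nat (card {\<chi>. is_char (homU K G p) \<chi>}) else 0)"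
    by (rule sum_chars[OF finite_homU add_subgroup_homU v])
  finally show ?thesis
    using bij_betw_same_card[OF bij_betw_pairing_char] by simp
qed


lemma char_group_simps [simp]:
  "carrier (char_group K G p) = homL K G p" "\<rho> \<otimes>\<^bsub>char_group K G p\<^esub> \<mu> = mulL \<rho> \<mu>"
  "\<one>\<^bsub>char_group K G p\<^esub> = oneL"
  by (simp_all add: char_group_def)

lemma mulL_in_homL: "\<rho> \<in> homL K G p \<Longrightarrow> \<mu> \<in> homL K G p \<Longrightarrow> mulL \<rho> \<mu> \<in> homL K G p"
  unfolding homL_def mulL_def using is_char_mult by fastforce

lemma oneL_in_homL: "oneL \<in> homL K G p"
  unfolding homL_def oneL_def is_char_def by simp

lemma cnj_in_homL: "\<rho> \<in> homL K G p \<Longrightarrow> (\<lambda>n x a. cnj (\<rho> n x a)) \<in> homL K G p"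
  unfolding homL_def using is_char_cnj by fastforce

lemma mulL_cnj:
  assumes \<rho>: "\<rho> \<in> homL K G p"
  shows "mulL (\<lambda>n x a. cnj (\<rho> n x a)) \<rho> = oneL"
proof -
  have "\<rho> n x a * cnj (\<rho> n x a) = 1" for n x a
  proof (cases "x \<in> K n")
    case True
    show ?thesis
      by (rule is_char_mult_cnj[OF add_subgroup_G homL_is_char[OF \<rho> True]])
  qed (simp add: homL_outside[OF \<rho>])
  then show ?thesis
    unfolding mulL_def oneL_def by (simp add: fun_eq_iff mult.commute)
qed

lemma comm_group_char_group: "comm_group (char_group K G p)"
proof (rule comm_groupI)
  fix \<rho> assume "\<rho> \<in> carrier (char_group K G p)"
  then show "\<exists>\<mu>\<in>carrier (char_group K G p). \<mu> \<otimes>\<^bsub>char_group K G p\<^esub> \<rho> = \<one>\<^bsub>char_group K G p\<^esub>"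
    using cnj_in_homL mulL_cnj by (intro bexI[of _ "\<lambda>n x a. cnj (\<rho> n x a)"]) simp_all
qed (simp_all add: mulL_in_homL oneL_in_homL, simp_all add: mulL_def oneL_def mult_ac)

lemma inv_char_group:
  "\<rho> \<in> homL K G p \<Longrightarrow> inv\<^bsub>char_group K G p\<^esub> \<rho> = (\<lambda>n x a. cnj (\<rho> n x a))"
  by (rule group.inv_equality[OF comm_group.axioms(2)[OF comm_group_char_group]])
    (simp_all add: mulL_cnj cnj_in_homL)

lemma pairing_cnj: "pairing K (\<lambda>n x a. cnj (\<rho> n x a)) \<omega> = cnj (pairing K \<rho> \<omega>)"
  unfolding pairing_eq_prod_cells by (simp add: split_def)

lemma subgroup_annihilator: "subgroup (annihilator K G p T) (char_group K G p)"
proof (rule group.subgroupI[OF comm_group.axioms(2)[OF comm_group_char_group]])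
  show "annihilator K G p T \<subseteq> carrier (char_group K G p)"
    unfolding annihilator_def by auto
  show "annihilator K G p T \<noteq> {}"
    using oneL_in_homL pairing_oneL unfolding annihilator_def by blast
  show "inv\<^bsub>char_group K G p\<^esub> \<rho> \<in> annihilator K G p T" if "\<rho> \<in> annihilator K G p T" for \<rho>
    using that cnj_in_homL unfolding annihilator_def by (simp add: inv_char_group pairing_cnj)
  show "\<rho> \<otimes>\<^bsub>char_group K G p\<^esub> \<mu> \<in> annihilator K G p T"
    if "\<rho> \<in> annihilator K G p T" "\<mu> \<in> annihilator K G p T" for \<rho> \<mu>
    using that mulL_in_homL unfolding annihilator_def by (simp add: pairing_mulL)
qed

lemma card_annihilator:
  assumes T: "add_subgroup T" "T \<subseteq> homU K G p"
  shows "finite (annihilator K G p T)" "card (annihilator K G p T) * card T = card (homU K G p)"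
proof -
  have "inj_on (pairing_char K G p) (annihilator K G p T)"
    using bij_betw_imp_inj_on[OF bij_betw_pairing_char] by (rule inj_on_subset) (auto simp: annihilator_def)
  moreover have "pairing_char K G p ` annihilator K G p T = chars_trivial_on (homU K G p) T"
  proof
    show "pairing_char K G p ` annihilator K G p T \<subseteq> chars_trivial_on (homU K G p) T"
      using is_char_pairing_char T(2)
      by (auto simp: annihilator_def chars_trivial_on_def pairing_char_def subset_iff)
    show "chars_trivial_on (homU K G p) T \<subseteq> pairing_char K G p ` annihilator K G p T"
    proof
      fix \<chi> assume \<chi>: "\<chi> \<in> chars_trivial_on (homU K G p) T"
      then obtain \<rho> where \<rho>: "\<rho> \<in> homL K G p" "\<chi> = pairing_char K G p \<rho>"
        using bij_betw_imp_surj_on[OF bij_betw_pairing_char] unfolding chars_trivial_on_def by blast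
      then have "\<rho> \<in> annihilator K G p T"
        using \<chi> T(2) by (auto simp: annihilator_def chars_trivial_on_def pairing_char_def subset_iff)
      with \<rho>(2) show "\<chi> \<in> pairing_char K G p ` annihilator K G p T"
        by blast
    qed
  qed
  ultimately have "bij_betw (pairing_char K G p) (annihilator K G p T) (chars_trivial_on (homU K G p) T)"
    by (simp add: bij_betw_def)
  then show "finite (annihilator K G p T)" "card (annihilator K G p T) * card T = card (homU K G p)"
    using card_chars_trivial_on[OF finite_homU add_subgroup_homU T]
    by (simp_all add: bij_betw_finite bij_betw_same_card)
qed

lemma card_annihilator_nonzero:
  assumes "add_subgroup T" "T \<subseteq> homU K G p"
  shows "card (annihilator K G p T) \<noteq> 0"
  using card_annihilator(1)[OF assms] subgroup.one_closed[OF subgroup_annihilator] by auto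

end

section \<open>The coboundary maps\<close>

locale cochain_complex = finite_cochains K G for K :: "int \<Rightarrow> 'k set" and G :: "int \<Rightarrow> 'g::ab_group_add set" +
  fixes c :: "int \<Rightarrow> 'k \<Rightarrow> 'k \<Rightarrow> int" and dG :: "int \<Rightarrow> 'g \<Rightarrow> 'g"
  assumes C_complex: "\<And>n x z. x \<in> K n \<Longrightarrow> z \<in> K (n - 2) \<Longrightarrow>
                       (\<Sum>y\<in>K (n - 1). c n x y * c (n - 1) y z) = 0"
    and dG_maps: "\<And>n a. a \<in> G n \<Longrightarrow> dG n a \<in> G (n - 1)"
    and dG_add: "\<And>n a b. a \<in> G n \<Longrightarrow> b \<in> G n \<Longrightarrow> dG n (a + b) = dG n a + dG n b"
    and G_complex: "\<And>n a. a \<in> G n \<Longrightarrow> dG (n - 1) (dG n a) = 0"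
begin

lemma additive_on_dG: "additive_on (G n) (dG n)"
  unfolding additive_on_def using dG_add by blast

lemma dU_at: "x \<in> K n \<Longrightarrow> dU K c dG p \<omega> n x =
    (\<Sum>y\<in>K (n - 1). zsmult (c n x y) (\<omega> (n - 1) y))
      - (if even p then dG (n - p) (\<omega> n x) else - dG (n - p) (\<omega> n x))"
  and dU_outside: "x \<notin> K n \<Longrightarrow> dU K c dG p \<omega> n x = 0"
  unfolding dU_def by simp_all

lemma dU_in_homU:
  assumes \<omega>: "\<omega> \<in> homU K G p"
  shows "dU K c dG p \<omega> \<in> homU K G (p + 1)"
  unfolding homU_def
proof (intro CollectI allI conjI impI)
  fix n x assume x: "x \<in> K n"
  have "zsmult (c n x y) (\<omega> (n - 1) y) \<in> G (n - (p + 1))" if "y \<in> K (n - 1)" for y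
    using add_subgroup_zsmult[OF add_subgroup_G homU_mem[OF \<omega> that]] by (simp add: algebra_simps)
  then have "(\<Sum>y\<in>K (n - 1). zsmult (c n x y) (\<omega> (n - 1) y)) \<in> G (n - (p + 1))"
    by (rule add_subgroup_sum[OF add_subgroup_G])
  moreover have "dG (n - p) (\<omega> n x) \<in> G (n - (p + 1))"
    using dG_maps[OF homU_mem[OF \<omega> x]] by (simp add: algebra_simps)
  ultimately show "dU K c dG p \<omega> n x \<in> G (n - (p + 1))"
    unfolding dU_at[OF x] using add_subgroup_diff[OF add_subgroup_G] add_subgroup_uminus[OF add_subgroup_G]
    by simp
qed (rule dU_outside)

lemma additive_on_dU: "additive_on (homU K G p) (dU K c dG p)"
  unfolding additive_on_def
proof (intro ballI ext)
  fix \<omega> \<omega>' n x assume \<omega>: "\<omega> \<in> homU K G p" "\<omega>' \<in> homU K G p"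
  show "dU K c dG p (\<omega> + \<omega>') n x = (dU K c dG p \<omega> + dU K c dG p \<omega>') n x"
  proof (cases "x \<in> K n")
    case True
    then show ?thesis
      using dG_add[OF homU_mem[OF \<omega>(1) True] homU_mem[OF \<omega>(2) True]]
      by (simp add: dU_at zsmult_add_right sum.distrib algebra_simps)
  qed (simp add: dU_outside)
qed

lemma sum_zsmult_boundary_boundary:
  assumes x: "x \<in> K n"
  shows "(\<Sum>y\<in>K (n - 1). zsmult (c n x y) (\<Sum>z\<in>K (n - 2). zsmult (c (n - 1) y z) (g z))) = 0"
proof -
  have "(\<Sum>y\<in>K (n - 1). zsmult (c n x y) (\<Sum>z\<in>K (n - 2). zsmult (c (n - 1) y z) (g z)))
      = (\<Sum>z\<in>K (n - 2). zsmult (\<Sum>y\<in>K (n - 1). c n x y * c (n - 1) y z) (g z))"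
    by (simp add: zsmult_sum_right zsmult_sum_left zsmult_zsmult sum.swap[of _ "K (n - 1)"])
  also have "\<dots> = 0"
    using C_complex[OF x] by simp
  finally show ?thesis .
qed

lemma dU_dU:
  assumes \<omega>: "\<omega> \<in> homU K G p"
  shows "dU K c dG (p + 1) (dU K c dG p \<omega>) = 0"
proof (intro ext)
  fix n x
  show "dU K c dG (p + 1) (dU K c dG p \<omega>) n x = 0 n x"
  proof (cases "x \<in> K n")
    case x: True
    define sgn where "sgn g = (if even p then g else - g)" for g :: 'g
    have idx: "n - 1 - p = n - (p + 1)" "n - 1 - 1 = n - 2" "n - p - 1 = n - (p + 1)"
      by simp_all
    have sgn_zsmult: "zsmult k (sgn g) = sgn (zsmult k g)" for k g
      by (simp add: sgn_def zsmult_uminus_right)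
    have sgn_sum: "sgn (\<Sum>i\<in>I. f i) = (\<Sum>i\<in>I. sgn (f i))" for I and f :: "'k \<Rightarrow> 'g"
      by (simp add: sgn_def sum_negf)
    let ?B = "\<Sum>y\<in>K (n - 1). zsmult (c n x y) (dG (n - (p + 1)) (\<omega> (n - 1) y))"
    note cc = sum_zsmult_boundary_boundary[OF x, of "\<omega> (n - 2)"]
    have T1: "(\<Sum>y\<in>K (n - 1). zsmult (c n x y) (dU K c dG p \<omega> (n - 1) y)) = - sgn ?B"
      using cc by (simp add: dU_at idx zsmult_add_right zsmult_sum_right sum.distrib sum_subtractf
        sgn_sum sgn_zsmult zsmult_diff_right flip: sgn_def)
    have T2: "dG (n - (p + 1)) (dU K c dG p \<omega> n x) = ?B"
    proof -
      note dG = additive_on_diff[OF add_subgroup_G additive_on_dG] additive_on_sum[OF add_subgroup_G additive_on_dG]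
        additive_on_zsmult[OF add_subgroup_G additive_on_dG] additive_on_uminus[OF add_subgroup_G additive_on_dG]
      have mem: "\<omega> (n - 1) y \<in> G (n - (p + 1))" if "y \<in> K (n - 1)" for y
        using homU_mem[OF \<omega> that] by (simp add: idx)
      have "dG (n - (p + 1)) (dG (n - p) (\<omega> n x)) = 0"
        using G_complex[OF homU_mem[OF \<omega> x]] by (simp add: idx)
      moreover have "dG (n - p) (\<omega> n x) \<in> G (n - (p + 1))"
        using dG_maps[OF homU_mem[OF \<omega> x]] by (simp add: idx)
      ultimately have "dG (n - (p + 1)) (sgn (dG (n - p) (\<omega> n x))) = 0"
        using dG(4) by (simp add: sgn_def)
      moreover have "dG (n - (p + 1)) (\<Sum>y\<in>K (n - 1). zsmult (c n x y) (\<omega> (n - 1) y)) = ?B"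
        using dG(2)[of "K (n - 1)" "\<lambda>y. zsmult (c n x y) (\<omega> (n - 1) y)"] dG(3) mem
          add_subgroup_zsmult[OF add_subgroup_G] by simp
      moreover have "(\<Sum>y\<in>K (n - 1). zsmult (c n x y) (\<omega> (n - 1) y)) \<in> G (n - (p + 1))"
        by (intro add_subgroup_sum[OF add_subgroup_G] add_subgroup_zsmult[OF add_subgroup_G] mem)
      moreover have "sgn (dG (n - p) (\<omega> n x)) \<in> G (n - (p + 1))"
        using \<open>dG (n - p) (\<omega> n x) \<in> G (n - (p + 1))\<close> add_subgroup_uminus[OF add_subgroup_G]
        by (simp add: sgn_def)
      ultimately show ?thesis
        using dG(1) by (simp add: dU_at[OF x] flip: sgn_def)
    qed
    have "dU K c dG (p + 1) (dU K c dG p \<omega>) n x = - sgn ?B - (if even (p + 1) then ?B else - ?B)"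
      unfolding dU_at[OF x, where p = "p + 1" and \<omega> = "dU K c dG p \<omega>"] T1 T2 ..
    then show ?thesis
      by (simp add: sgn_def)
  qed (simp add: dU_outside)
qed


lemma dL_adjoint:
  assumes \<nu>: "\<nu> \<in> homL K G q"
  shows "dL K G c dG q \<nu> \<in> homL K G (q - 1)"
    and "\<And>\<omega>. \<omega> \<in> homU K G (q - 1) \<Longrightarrow> pairing K (dL K G c dG q \<nu>) \<omega> = pairing K \<nu> (dU K c dG (q - 1) \<omega>)"
proof -
  let ?P = "\<lambda>\<mu>. \<mu> \<in> homL K G (q - 1) \<and>
      (\<forall>\<omega>\<in>homU K G (q - 1). pairing K \<mu> \<omega> = pairing K \<nu> (dU K c dG (q - 1) \<omega>))"
  define \<chi> where "\<chi> \<omega> = (if \<omega> \<in> homU K G (q - 1) then pairing K \<nu> (dU K c dG (q - 1) \<omega>) else 1)" for \<omega>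
  have d: "dU K c dG (q - 1) \<omega> \<in> homU K G q" if "\<omega> \<in> homU K G (q - 1)" for \<omega>
    using dU_in_homU[OF that] by simp
  have \<chi>_char: "is_char (homU K G (q - 1)) \<chi>"
    unfolding is_char_def \<chi>_def
    using additive_onD[OF add_subgroup_homU additive_on_dU] pairing_add[OF \<nu> d d] norm_pairing[OF \<nu> d]
      add_subgroup_add[OF add_subgroup_homU]
    by simp
  define \<mu> where "\<mu> = homL_of_char K G (q - 1) \<chi>"
  have "?P \<mu>"
    using homL_of_char_in_homL[OF \<chi>_char] pairing_homL_of_char[OF \<chi>_char] by (simp add: \<mu>_def \<chi>_def)
  moreover have "\<mu>' = \<mu>" if "?P \<mu>'" for \<mu>'
    using homL_eqI[of \<mu>' "q - 1" \<mu>] that \<open>?P \<mu>\<close> by simp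
  ultimately have "?P (dL K G c dG q \<nu>)"
    unfolding dL_def by (rule theI)
  then show "dL K G c dG q \<nu> \<in> homL K G (q - 1)"
    and "\<And>\<omega>. \<omega> \<in> homU K G (q - 1) \<Longrightarrow> pairing K (dL K G c dG q \<nu>) \<omega> = pairing K \<nu> (dU K c dG (q - 1) \<omega>)"
    by simp_all
qed

lemma group_hom_dL: "group_hom (char_group K G q) (char_group K G (q - 1)) (dL K G c dG q)"
proof -
  have mult: "dL K G c dG q (mulL \<nu> \<nu>') = mulL (dL K G c dG q \<nu>) (dL K G c dG q \<nu>')"
    if \<nu>: "\<nu> \<in> homL K G q" "\<nu>' \<in> homL K G q" for \<nu> \<nu>'
  proof (rule homL_eqI[of _ "q - 1"])
    show "dL K G c dG q (mulL \<nu> \<nu>') \<in> homL K G (q - 1)"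
      by (rule dL_adjoint(1)[OF mulL_in_homL[OF \<nu>]])
    show "mulL (dL K G c dG q \<nu>) (dL K G c dG q \<nu>') \<in> homL K G (q - 1)"
      by (rule mulL_in_homL[OF dL_adjoint(1)[OF \<nu>(1)] dL_adjoint(1)[OF \<nu>(2)]])
    fix \<omega> assume "\<omega> \<in> homU K G (q - 1)"
    then show "pairing K (dL K G c dG q (mulL \<nu> \<nu>')) \<omega>
        = pairing K (mulL (dL K G c dG q \<nu>) (dL K G c dG q \<nu>')) \<omega>"
      by (simp add: dL_adjoint(2) \<nu> mulL_in_homL pairing_mulL)
  qed
  show ?thesis
  proof (rule group_hom.intro)
    show "group (char_group K G q)" "group (char_group K G (q - 1))"
      by (rule comm_group.axioms(2)[OF comm_group_char_group])+
    show "group_hom_axioms (char_group K G q) (char_group K G (q - 1)) (dL K G c dG q)"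
      unfolding group_hom_axioms_def hom_def using dL_adjoint(1) mult by (simp add: Pi_def)
  qed
qed

lemma kernel_dL:
  "{\<nu> \<in> homL K G q. dL K G c dG q \<nu> = oneL} = annihilator K G q (dU K c dG (q - 1) ` homU K G (q - 1))"
proof -
  have "dL K G c dG q \<nu> = oneL \<longleftrightarrow> (\<forall>\<omega>\<in>homU K G (q - 1). pairing K \<nu> (dU K c dG (q - 1) \<omega>) = 1)"
    if \<nu>: "\<nu> \<in> homL K G q" for \<nu>
    using homL_eqI[OF dL_adjoint(1)[OF \<nu>] oneL_in_homL] dL_adjoint[OF \<nu>] pairing_oneL by metis
  then show ?thesis
    unfolding annihilator_def by auto
qed

section \<open>The order of \<open>H\<^sub>0\<close>\<close>

definition cocycles0 where "cocycles0 = {\<omega> \<in> homU K G 0. dU K c dG 0 \<omega> = 0}"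

definition coboundaries0 where "coboundaries0 = dU K c dG (-1) ` homU K G (-1)"

lemma add_subgroup_cocycles0: "add_subgroup cocycles0"
  unfolding cocycles0_def by (rule add_subgroup_kernel[OF add_subgroup_homU additive_on_dU])

lemma add_subgroup_coboundaries0: "add_subgroup coboundaries0"
  unfolding coboundaries0_def by (rule add_subgroup_image[OF add_subgroup_homU additive_on_dU])

lemma cocycles0_subset: "cocycles0 \<subseteq> homU K G 0"
  unfolding cocycles0_def by blast

lemma coboundaries0_subset_cocycles0: "coboundaries0 \<subseteq> cocycles0"
  unfolding coboundaries0_def cocycles0_def using dU_in_homU[of _ "-1"] dU_dU[of _ "-1"] by auto

lemma finite_cocycles0: "finite cocycles0"
  using cocycles0_subset finite_homU by (rule finite_subset)

lemma card_image_dL: "card (dL K G c dG q ` homL K G q) = card (dU K c dG (q - 1) ` homU K G (q - 1))"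
proof -
  let ?D = "dL K G c dG q" and ?d = "dU K c dG (q - 1)"
  let ?A = "annihilator K G q (?d ` homU K G (q - 1))"
  interpret dL: group_hom "char_group K G q" "char_group K G (q - 1)" ?D
    by (rule group_hom_dL)
  have im: "add_subgroup (?d ` homU K G (q - 1))" "?d ` homU K G (q - 1) \<subseteq> homU K G q"
    using add_subgroup_image[OF add_subgroup_homU additive_on_dU] dU_in_homU[of _ "q - 1"] by auto
  have "card (?D ` homL K G q) * card ?A = card (homU K G q)"
    using dL.card_image_mult_card_kernel finite_homL card_homL kernel_dL[of q]
    by (simp add: kernel_def)
  also have "\<dots> = card (?d ` homU K G (q - 1)) * card ?A"
    using card_annihilator[OF im] by (simp add: mult.commute)
  finally show ?thesis
    using card_annihilator_nonzero[OF im] by simp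
qed

lemma image_dL1: "dL K G c dG 1 ` homL K G 1 = annihilator K G 0 cocycles0"
proof -
  let ?A = "annihilator K G 0 cocycles0"
  have "dL K G c dG 1 ` homL K G 1 \<subseteq> ?A"
    using dL_adjoint[of _ 1] pairing_zero unfolding annihilator_def cocycles0_def by auto
  moreover have "card (dL K G c dG 1 ` homL K G 1) * card cocycles0 = card ?A * card cocycles0"
    using card_image_dL[of 1] card_annihilator(2)[OF add_subgroup_cocycles0 cocycles0_subset]
      card_image_mult_card_zeros[OF finite_homU add_subgroup_homU additive_on_dU, of 0]
    by (simp add: cocycles0_def)
  moreover have "card cocycles0 \<noteq> 0"
    using finite_cocycles0 add_subgroup_zero[OF add_subgroup_cocycles0] by auto
  ultimately show ?thesis
    using card_annihilator(1)[OF add_subgroup_cocycles0 cocycles0_subset] by (simp add: card_subset_eq)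
qed

lemma card_H0: "card (H0 K G c dG) * card coboundaries0 = card cocycles0"
proof -
  let ?A = "annihilator K G 0"
  interpret char_group0: comm_group "char_group K G 0"
    by (rule comm_group_char_group)
  have H0: "H0 K G c dG = (\<lambda>\<rho>. mulL \<rho> ` ?A cocycles0) ` ?A coboundaries0"
    unfolding H0_def image_dL1 kernel_dL[of 0, simplified] coboundaries0_def ..
  have B: "add_subgroup coboundaries0" "coboundaries0 \<subseteq> homU K G 0"
    using add_subgroup_coboundaries0 coboundaries0_subset_cocycles0 cocycles0_subset by auto
  have "?A cocycles0 \<subseteq> ?A coboundaries0"
    using coboundaries0_subset_cocycles0 unfolding annihilator_def by blast
  then have "card (H0 K G c dG) * card (?A cocycles0) = card (?A coboundaries0)"
    using char_group0.card_lcosets_in_subgroup[OF subgroup_annihilator subgroup_annihilator]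
      card_annihilator(1)[OF B]
    by (simp add: H0)
  moreover have "card (?A coboundaries0) * card coboundaries0 = card (homU K G 0)"
    by (rule card_annihilator(2)[OF B])
  moreover have "card (?A cocycles0) * card cocycles0 = card (homU K G 0)"
    by (rule card_annihilator(2)[OF add_subgroup_cocycles0 cocycles0_subset])
  moreover have "card (?A cocycles0) \<noteq> 0"
    by (rule card_annihilator_nonzero[OF add_subgroup_cocycles0 cocycles0_subset])
  ultimately have "card (?A cocycles0) * (card (H0 K G c dG) * card coboundaries0)
      = card (?A cocycles0) * card cocycles0" "card (?A cocycles0) \<noteq> 0"
    by (simp_all add: ac_simps)
  then show ?thesis
    by simp
qed

section \<open>The ground state space\<close>

lemma Hspace_outside: "\<psi> \<in> Hspace K G \<Longrightarrow> \<omega> \<notin> homU K G 0 \<Longrightarrow> \<psi> \<omega> = 0"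
  unfolding Hspace_def by blast

lemma Bop_eq:
  assumes \<psi>: "\<psi> \<in> Hspace K G"
  shows "Bop K G c dG \<psi> = (\<lambda>\<omega>. if \<omega> \<in> cocycles0 then \<psi> \<omega> else 0)"
proof
  fix \<omega>
  have B: "Bop K G c dG \<psi> \<omega>
      = (\<Sum>\<beta>\<in>homL K G 1. pairing K (dL K G c dG 1 \<beta>) \<omega>) * \<psi> \<omega> / of_nat (card (homL K G 1))"
    unfolding Bop_def Qop_def by (simp add: sum_distrib_right)
  show "Bop K G c dG \<psi> \<omega> = (if \<omega> \<in> cocycles0 then \<psi> \<omega> else 0)"
  proof (cases "\<omega> \<in> homU K G 0")
    case True
    \<comment> \<open>character orthogonality turns the average of \<open>Q\<close> into the indicator of \<open>d\<^sup>0 \<omega> = 0\<close>\<close>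
    have "(\<Sum>\<beta>\<in>homL K G 1. pairing K (dL K G c dG 1 \<beta>) \<omega>)
        = (\<Sum>\<beta>\<in>homL K G 1. pairing K \<beta> (dU K c dG 0 \<omega>))"
      using dL_adjoint(2)[of _ 1] True by simp
    also have "\<dots> = (if dU K c dG 0 \<omega> = 0 then of_nat (card (homL K G 1)) else 0)"
      using sum_pairing dU_in_homU[OF True] by simp
    finally have S: "(\<Sum>\<beta>\<in>homL K G 1. pairing K (dL K G c dG 1 \<beta>) \<omega>)
        = (if dU K c dG 0 \<omega> = 0 then of_nat (card (homL K G 1)) else 0)" .
    have "card (homL K G 1) \<noteq> 0"
      using finite_homL[of 1] oneL_in_homL[of 1] by auto
    with B S True show ?thesis
      unfolding cocycles0_def by simp
  next
    case False
    then show ?thesis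
      using B Hspace_outside[OF \<psi> False] cocycles0_subset by auto
  qed
qed

lemma Aop_eq:
  "Aop K G c dG \<phi> \<omega> = (if \<omega> \<in> homU K G 0
      then (\<Sum>\<alpha>\<in>homU K G (-1). \<phi> (\<omega> - dU K c dG (-1) \<alpha>)) else 0) / of_nat (card (homU K G (-1)))"
proof -
  have "(\<lambda>n x. \<omega> n x - \<beta> n x) = \<omega> - \<beta>" for \<beta> :: "int \<Rightarrow> 'k \<Rightarrow> 'g"
    by (simp add: fun_eq_iff)
  then show ?thesis
    unfolding Aop_def Pop_def by simp
qed

lemma Aop_translate:
  assumes b: "b \<in> coboundaries0"
  shows "Aop K G c dG \<phi> (\<omega> + b) = Aop K G c dG \<phi> \<omega>"
proof -
  obtain \<alpha>0 where \<alpha>0: "\<alpha>0 \<in> homU K G (-1)" "b = dU K c dG (-1) \<alpha>0"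
    using b unfolding coboundaries0_def by blast
  have b0: "b \<in> homU K G 0"
    using b coboundaries0_subset_cocycles0 cocycles0_subset by blast
  have homU_iff: "\<omega> + b \<in> homU K G 0 \<longleftrightarrow> \<omega> \<in> homU K G 0"
    using add_subgroup_add[OF add_subgroup_homU _ b0] add_subgroup_diff[OF add_subgroup_homU _ b0]
    by (metis add_diff_cancel)
  \<comment> \<open>shifting the summation variable by \<open>\<alpha>0\<close> absorbs the translation by \<open>b = d\<^sup>-\<^sup>1 \<alpha>0\<close>\<close>
  have "(\<Sum>\<alpha>\<in>homU K G (-1). \<phi> (\<omega> + b - dU K c dG (-1) \<alpha>))
      = (\<Sum>\<alpha>\<in>homU K G (-1). \<phi> (\<omega> - dU K c dG (-1) (\<alpha> - \<alpha>0)))"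
  proof (rule sum.cong[OF refl])
    fix \<alpha> assume "\<alpha> \<in> homU K G (-1)"
    then have d: "dU K c dG (-1) (\<alpha> - \<alpha>0) = dU K c dG (-1) \<alpha> - b"
      using additive_on_diff[OF add_subgroup_homU additive_on_dU] \<alpha>0 by simp
    show "\<phi> (\<omega> + b - dU K c dG (-1) \<alpha>) = \<phi> (\<omega> - dU K c dG (-1) (\<alpha> - \<alpha>0))"
      by (simp only: d diff_diff_eq2)
  qed
  also have "\<dots> = (\<Sum>\<alpha>\<in>homU K G (-1). \<phi> (\<omega> - dU K c dG (-1) \<alpha>))"
    by (rule sum.reindex_bij_betw[OF add_subgroup_translate[OF add_subgroup_homU \<alpha>0(1)]])
  finally show ?thesis
    unfolding Aop_eq homU_iff by simp
qed

lemma Aop_Bop_vanishes: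
  assumes \<psi>: "\<psi> \<in> Hspace K G" and \<omega>: "\<omega> \<notin> cocycles0"
  shows "Aop K G c dG (Bop K G c dG \<psi>) \<omega> = 0"
proof -
  have "\<omega> - dU K c dG (-1) \<alpha> \<notin> cocycles0" if "\<alpha> \<in> homU K G (-1)" for \<alpha>
  proof
    assume "\<omega> - dU K c dG (-1) \<alpha> \<in> cocycles0"
    moreover have "dU K c dG (-1) \<alpha> \<in> cocycles0"
      using that coboundaries0_subset_cocycles0 unfolding coboundaries0_def by blast
    ultimately have "(\<omega> - dU K c dG (-1) \<alpha>) + dU K c dG (-1) \<alpha> \<in> cocycles0"
      by (rule add_subgroup_add[OF add_subgroup_cocycles0])
    with \<omega> show False
      by simp
  qed
  then show ?thesis
    unfolding Aop_eq Bop_eq[OF \<psi>] by simp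
qed

lemma Aop_Bop_fixes_periodic:
  assumes f0: "\<And>\<omega>. \<omega> \<notin> cocycles0 \<Longrightarrow> f \<omega> = 0"
    and periodic: "\<And>\<omega> b. b \<in> coboundaries0 \<Longrightarrow> f (\<omega> + b) = f \<omega>"
  shows "f \<in> Hspace K G" and "Aop K G c dG (Bop K G c dG f) = f"
proof -
  show H: "f \<in> Hspace K G"
    using f0 cocycles0_subset unfolding Hspace_def by blast
  have "Bop K G c dG f = f"
    using f0 by (auto simp: Bop_eq[OF H])
  moreover have "Aop K G c dG f = f"
  proof
    fix \<omega>
    show "Aop K G c dG f \<omega> = f \<omega>"
    proof (cases "\<omega> \<in> homU K G 0")
      case True
      have "f (\<omega> - dU K c dG (-1) \<alpha>) = f \<omega>" if "\<alpha> \<in> homU K G (-1)" for \<alpha>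
        using periodic[of "dU K c dG (-1) \<alpha>" "\<omega> - dU K c dG (-1) \<alpha>"] that
        unfolding coboundaries0_def by simp
      then have "(\<Sum>\<alpha>\<in>homU K G (-1). f (\<omega> - dU K c dG (-1) \<alpha>)) = of_nat (card (homU K G (-1))) * f \<omega>"
        by simp
      moreover have "card (homU K G (-1)) \<noteq> 0"
        using finite_homU add_subgroup_zero[OF add_subgroup_homU] by auto
      ultimately show ?thesis
        using True by (simp add: Aop_eq)
    next
      case False
      then show ?thesis
        using f0 cocycles0_subset by (auto simp: Aop_eq)
    qed
  qed
  ultimately show "Aop K G c dG (Bop K G c dG f) = f"
    by simp
qed

lemma ground_space_eq:
  "ground_space K G c dG
    = {f. (\<forall>\<omega>. \<omega> \<notin> cocycles0 \<longrightarrow> f \<omega> = 0) \<and> (\<forall>\<omega>. \<forall>b\<in>coboundaries0. f (\<omega> + b) = f \<omega>)}"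
proof
  show "ground_space K G c dG
      \<subseteq> {f. (\<forall>\<omega>. \<omega> \<notin> cocycles0 \<longrightarrow> f \<omega> = 0) \<and> (\<forall>\<omega>. \<forall>b\<in>coboundaries0. f (\<omega> + b) = f \<omega>)}"
    unfolding ground_space_def using Aop_Bop_vanishes Aop_translate by blast
  show "{f. (\<forall>\<omega>. \<omega> \<notin> cocycles0 \<longrightarrow> f \<omega> = 0) \<and> (\<forall>\<omega>. \<forall>b\<in>coboundaries0. f (\<omega> + b) = f \<omega>)}
      \<subseteq> ground_space K G c dG"
    unfolding ground_space_def using Aop_Bop_fixes_periodic by (blast intro: sym)
qed

lemma cdim_ground_space: "cdim (ground_space K G c dG) = card (H0 K G c dG)"
proof -
  let ?cosets = "(\<lambda>\<omega>. (+) \<omega> ` coboundaries0) ` cocycles0"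
  note Z = finite_cocycles0 add_subgroup_cocycles0
  note B = add_subgroup_coboundaries0 coboundaries0_subset_cocycles0
  have "cdim (ground_space K G c dG) = card ?cosets"
    unfolding ground_space_eq by (rule cdim_periodic_functions[OF Z(2) B Z(1)])
  moreover have "card ?cosets * card coboundaries0 = card (H0 K G c dG) * card coboundaries0"
    using card_add_cosets[OF Z B] card_H0 by simp
  moreover have "card coboundaries0 \<noteq> 0"
    using finite_subset[OF coboundaries0_subset_cocycles0 finite_cocycles0]
      add_subgroup_zero[OF add_subgroup_coboundaries0] by auto
  ultimately show ?thesis
    by simp
qed

end

theorem mainTheorem6:
  fixes K :: "int \<Rightarrow> 'k set"
    and c :: "int \<Rightarrow> 'k \<Rightarrow> 'k \<Rightarrow> int"
    and G :: "int \<Rightarrow> 'g::ab_group_add set"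
    and dG :: "int \<Rightarrow> 'g \<Rightarrow> 'g"
  assumes K_fin: "\<And>n. finite (K n)"
    and K_supp: "finite {n. K n \<noteq> {}}"
    and C_complex: "\<And>n x z. x \<in> K n \<Longrightarrow> z \<in> K (n - 2) \<Longrightarrow>
                       (\<Sum>y\<in>K (n - 1). c n x y * c (n - 1) y z) = 0"
    and G_fin: "\<And>n. finite (G n)"
    and G_zero: "\<And>n. 0 \<in> G n"
    and G_add: "\<And>n a b. a \<in> G n \<Longrightarrow> b \<in> G n \<Longrightarrow> a + b \<in> G n"
    and G_neg: "\<And>n a. a \<in> G n \<Longrightarrow> - a \<in> G n"
    and dG_maps: "\<And>n a. a \<in> G n \<Longrightarrow> dG n a \<in> G (n - 1)"
    and dG_add: "\<And>n a b. a \<in> G n \<Longrightarrow> b \<in> G n \<Longrightarrow> dG n (a + b) = dG n a + dG n b"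
    and G_complex: "\<And>n a. a \<in> G n \<Longrightarrow> dG (n - 1) (dG n a) = 0"
  shows "cdim (ground_space K G c dG) = card (H0 K G c dG)"
proof -
  interpret cochain_complex K G c dG
    by unfold_locales (fact assms)+
  show ?thesis
    by (rule cdim_ground_space)
qed

end
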